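(* In the setting of the context, let $y\in\mathbb{R}^n$ satisfy $$F(y)-F^\star\le\frac{\lambda_{\min}(M^x)}{\sigma^2}\min\Big\{\frac{\eta^2}{4L},\ \frac{\delta^2\lambda_{\min}(M)}{2(1+\delta)^2L^2}\big(F(\mathcal{G}_F(\bar x))-F^\star\big)\Big\}.$$ Then $\tilde x:=\mathcal{G}_F(y)$ satisfies $$\operatorname{dist}(0,\partial F(\tilde x))\le\frac{\sqrt{\lambda_{\min}(M^x)}}{\sigma}\min\big\{\eta,\ \delta\|(\tilde x,\Lambda(\tilde x,\bar\lambda,\sigma))-(\bar x,\bar\lambda)\|_M\big\}.$$
   Context: Problem $\min_{x\in\mathbb{R}^n}f_0(x)+g(x)+h(Ax)$ with $A\in\mathbb{R}^{m\times n}$, $f_0:\mathbb{R}^n\to\mathbb{R}$ convex and differentiable with $L_0$-Lipschitz gradient, $g,h$ proper closed convex; $h^*$ is the Fenchel conjugate of $h$. Lagrangian $\ell(x,\lambda)=f_0(x)+g(x)+\langle Ax,\lambda\rangle-h^*(\lambda)$; $T_\ell(x,\lambda)=\{(v,u):v\in\nabla f_0(x)+\partial g(x)+A^\top\lambda,\ u\in\partial h^*(\lambda)-Ax\}$ (maximal monotone on $\mathbb{R}^{n+m}$), and $\Omega:=T_\ell^{-1}(0,0)\ne\emptyset$. $M=\operatorname{diag}(M^x,M^\lambda)$ with $M^x,M^\lambda$ symmetric positive definite and $\lambda_{\max}(M)=1$; $\|v\|_P=\sqrt{v^\top Pv}$. Fix $\bar x\in\mathbb{R}^n$, $\bar\lambda\in\mathbb{R}^m$,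 $\sigma>0$, $\eta>0$, $\delta>0$. Define $\psi(u)=\max_\lambda\{\langle u,\lambda\rangle-h^*(\lambda)-\frac{1}{2\sigma}\|\lambda-\bar\lambda\|^2_{M^\lambda}\}$, $\Lambda(x,\bar\lambda,\sigma)=\arg\max_\lambda\{\ell(x,\lambda)-\frac{1}{2\sigma}\|\lambda-\bar\lambda\|^2_{M^\lambda}\}$, $F(x)=f(x)+\phi(x)$ with $f(x)=f_0(x)+\psi(Ax)$, $\phi(x)=g(x)+\frac{1}{2\sigma}\|x-\bar x\|^2_{M^x}$, $F^\star=\min F$, $L:=L_0+\frac{\sigma}{\lambda_{\min}(M^\lambda)}\|A\|^2$, and $\mathcal{G}_F(x)=\arg\min_y\{\frac L2\|y-(x-\frac1L\nabla f(x))\|^2+\phi(y)\}$. *)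

theory Defs
  imports "HOL-Analysis.Analysis"
begin

definition pnorm :: "real^'k^'k \<Rightarrow> real^'k \<Rightarrow> real" where
  "pnorm P v = sqrt (v \<bullet> (P *v v))"

definition sym_pd :: "real^'k^'k \<Rightarrow> bool" where
  "sym_pd P \<longleftrightarrow> transpose P = P \<and> (\<forall>v. v \<noteq> 0 \<longrightarrow> 0 < v \<bullet> (P *v v))"

definition eigvals :: "real^'k^'k \<Rightarrow> real set" where
  "eigvals P = {\<mu>. \<exists>v. v \<noteq> 0 \<and> P *v v = \<mu> *\<^sub>R v}"

definition lam_min :: "real^'k^'k \<Rightarrow> real" where
  "lam_min P = Inf (eigvals P)"

definition lam_max :: "real^'k^'k \<Rightarrow> real" where
  "lam_max P = Sup (eigvals P)"

definition blockdiag :: "real^'n^'n \<Rightarrow> real^'m^'m \<Rightarrow> real^('n + 'm)^('n + 'm)" where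
  "blockdiag P Q = (\<chi> i j. (case (i, j) of
       (Inl a, Inl b) \<Rightarrow> P $ a $ b
     | (Inr a, Inr b) \<Rightarrow> Q $ a $ b
     | _ \<Rightarrow> 0))"

definition stack :: "real^'n \<Rightarrow> real^'m \<Rightarrow> real^('n + 'm)" where
  "stack x l = (\<chi> i. (case i of Inl a \<Rightarrow> x $ a | Inr b \<Rightarrow> l $ b))"

definition proper_closed_convex :: "('a::{real_vector,topological_space} \<Rightarrow> ereal) \<Rightarrow> bool" where
  "proper_closed_convex g \<longleftrightarrow>
     (\<forall>x. g x \<noteq> -\<infinity>) \<and> (\<exists>x. g x \<noteq> \<infinity>) \<and>
     convex {(x, t::real). g x \<le> ereal t} \<and> closed {(x, t::real). g x \<le> ereal t}"

definition fconj :: "('a::real_inner \<Rightarrow> ereal) \<Rightarrow> 'a \<Rightarrow> ereal" where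
  "fconj h l = (SUP u. ereal (u \<bullet> l) - h u)"

definition subgrad :: "('a::real_inner \<Rightarrow> ereal) \<Rightarrow> 'a \<Rightarrow> 'a set" where
  "subgrad F x = {v. \<bar>F x\<bar> \<noteq> \<infinity> \<and> (\<forall>z. F x + ereal (v \<bullet> (z - x)) \<le> F z)}"

definition grad :: "('a::real_inner \<Rightarrow> real) \<Rightarrow> 'a \<Rightarrow> 'a" where
  "grad f x = (THE d. (f has_derivative (\<lambda>v. d \<bullet> v)) (at x))"

definition lagr :: "(real^'n \<Rightarrow> real) \<Rightarrow> (real^'n \<Rightarrow> ereal) \<Rightarrow> (real^'m \<Rightarrow> ereal)
     \<Rightarrow> real^'n^'m \<Rightarrow> real^'n \<Rightarrow> real^'m \<Rightarrow> ereal" where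
  "lagr f0 g h A x l = ereal (f0 x) + g x + ereal ((A *v x) \<bullet> l) - fconj h l"

definition psi :: "(real^'m \<Rightarrow> ereal) \<Rightarrow> real^'m^'m \<Rightarrow> real^'m \<Rightarrow> real \<Rightarrow> real^'m \<Rightarrow> real" where
  "psi h Ml lbar \<sigma> u = real_of_ereal
     (SUP l. ereal (u \<bullet> l) - fconj h l - ereal ((pnorm Ml (l - lbar))\<^sup>2 / (2 * \<sigma>)))"

definition Lam :: "(real^'n \<Rightarrow> real) \<Rightarrow> (real^'n \<Rightarrow> ereal) \<Rightarrow> (real^'m \<Rightarrow> ereal)
     \<Rightarrow> real^'n^'m \<Rightarrow> real^'m^'m \<Rightarrow> real^'n \<Rightarrow> real^'m \<Rightarrow> real \<Rightarrow> real^'m" where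
  "Lam f0 g h A Ml x lbar \<sigma> = (THE l. \<forall>\<mu>.
      lagr f0 g h A x \<mu> - ereal ((pnorm Ml (\<mu> - lbar))\<^sup>2 / (2 * \<sigma>))
        \<le> lagr f0 g h A x l - ereal ((pnorm Ml (l - lbar))\<^sup>2 / (2 * \<sigma>)))"

definition fsm :: "(real^'n \<Rightarrow> real) \<Rightarrow> (real^'m \<Rightarrow> ereal) \<Rightarrow> real^'n^'m
     \<Rightarrow> real^'m^'m \<Rightarrow> real^'m \<Rightarrow> real \<Rightarrow> real^'n \<Rightarrow> real" where
  "fsm f0 h A Ml lbar \<sigma> x = f0 x + psi h Ml lbar \<sigma> (A *v x)"

definition phin :: "(real^'n \<Rightarrow> ereal) \<Rightarrow> real^'n^'n \<Rightarrow> real^'n \<Rightarrow> real \<Rightarrow> real^'n \<Rightarrow> ereal" where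
  "phin g Mx xbar \<sigma> x = g x + ereal ((pnorm Mx (x - xbar))\<^sup>2 / (2 * \<sigma>))"

definition GF :: "real \<Rightarrow> (real^'n \<Rightarrow> real) \<Rightarrow> (real^'n \<Rightarrow> ereal) \<Rightarrow> real^'n \<Rightarrow> real^'n" where
  "GF L f phi x = (THE y. \<forall>z.
      ereal (L / 2 * (norm (y - (x - (1 / L) *\<^sub>R grad f x)))\<^sup>2) + phi y
        \<le> ereal (L / 2 * (norm (z - (x - (1 / L) *\<^sub>R grad f x)))\<^sup>2) + phi z)"

definition Fobj :: "(real^'n \<Rightarrow> real) \<Rightarrow> (real^'n \<Rightarrow> ereal) \<Rightarrow> (real^'m \<Rightarrow> ereal)
     \<Rightarrow> real^'n^'m \<Rightarrow> real^'n^'n \<Rightarrow> real^'m^'m \<Rightarrow> real^'n \<Rightarrow> real^'m \<Rightarrow> real \<Rightarrow> real^'n \<Rightarrow> ereal" where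
  "Fobj f0 g h A Mx Ml xbar lbar \<sigma> x = ereal (fsm f0 h A Ml lbar \<sigma> x) + phin g Mx xbar \<sigma> x"

end

theory Submission
  imports Defs
begin

text \<open>
  \<open>F = f + \<phi>\<close> is \<open>\<lambda>\<^sub>m\<^sub>i\<^sub>n(Mx)/\<sigma>\<close>-strongly convex and \<open>f\<close> is convex with \<open>L\<close>-Lipschitz gradient,
  because \<open>\<nabla>\<psi>(u)\<close> is the maximiser of a strongly concave problem and depends
  \<open>\<sigma>/\<lambda>\<^sub>m\<^sub>i\<^sub>n(Ml)\<close>-Lipschitz on \<open>u\<close>. At \<open>x' = G\<^sub>F(y)\<close> the optimality condition of the prox
  step makes \<open>s = L (y - x') - (\<nabla>f y - \<nabla>f x')\<close> a subgradient of \<open>F\<close>, and the Lipschitz bound on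
  \<open>\<nabla>f\<close> gives the sufficient decrease \<open>\<parallel>s\<parallel>\<^sup>2 \<le> 2 L (F y - F\<^sup>\<star>)\<close>, which settles the \<open>\<eta>\<close> branch.
  For the \<open>\<delta>\<close> branch, \<open>F(G\<^sub>F(xbar)) - F\<^sup>\<star> \<le> L/2 \<parallel>x\<^sup>\<star> - xbar\<parallel>\<^sup>2\<close>, strong convexity gives
  \<open>\<parallel>x' - x\<^sup>\<star>\<parallel> \<le> \<sigma> \<parallel>s\<parallel> / \<lambda>\<^sub>m\<^sub>i\<^sub>n(Mx)\<close>, and the \<open>M\<close>-norm dominates \<open>\<lambda>\<^sub>m\<^sub>i\<^sub>n(Mx)\<^sup>1\<^sup>/\<^sup>2 \<parallel>x' - xbar\<parallel>\<close>;
  by the triangle inequality through \<open>x'\<close>, \<open>\<parallel>s\<parallel>\<close> is bounded by the target plus the fraction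
  \<open>\<delta>/(1+\<delta>)\<close> of itself.
\<close>

section \<open>Symmetric positive definite matrices\<close>

lemma sym_pd_transpose: "sym_pd P \<Longrightarrow> transpose P = P"
  by (simp add: sym_pd_def)

lemma sym_pd_quadratic_nonneg: "sym_pd P \<Longrightarrow> 0 \<le> v \<bullet> (P *v v)"
  by (cases "v = 0") (auto simp: sym_pd_def less_imp_le)

lemma pnorm_sq: "sym_pd P \<Longrightarrow> (pnorm P v)\<^sup>2 = v \<bullet> (P *v v)"
  by (simp add: pnorm_def sym_pd_quadratic_nonneg)

lemma symmetric_matrix_inner:
  fixes P :: "real^'k^'k"
  assumes "transpose P = P"
  shows "x \<bullet> (P *v y) = (P *v x) \<bullet> y"
proof -
  have "x \<bullet> (P *v y) = (x v* P) \<bullet> y"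
    by (rule dot_lmul_matrix[symmetric])
  then show ?thesis
    by (simp add: transpose_matrix_vector[symmetric] assms)
qed

lemma quadratic_form_add:
  fixes P :: "real^'k^'k"
  assumes "transpose P = P"
  shows "(a + d) \<bullet> (P *v (a + d)) = a \<bullet> (P *v a) + 2 * ((P *v a) \<bullet> d) + d \<bullet> (P *v d)"
  using symmetric_matrix_inner[OF assms, of a d] symmetric_matrix_inner[OF assms, of d a]
  by (simp add: matrix_vector_right_distrib inner_add_left inner_add_right inner_commute)

lemma nonneg_quadratic_linear_coeff_eq_0:
  fixes a b :: real
  assumes "\<And>t. 0 \<le> a * t + b * t\<^sup>2"
  shows "a = 0"
proof (rule ccontr)
  assume "a \<noteq> 0"
  define c where "c = \<bar>b\<bar> + 1"
  have "c > 0" by (simp add: c_def)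
  have "c\<^sup>2 * (a * (- a / c) + b * (- a / c)\<^sup>2) = a\<^sup>2 * (b - c)"
    using \<open>c > 0\<close> by (simp add: power2_eq_square field_simps)
  also have "\<dots> < 0"
    using \<open>a \<noteq> 0\<close> by (intro mult_pos_neg) (auto simp: c_def)
  finally have "c\<^sup>2 * (a * (- a / c) + b * (- a / c)\<^sup>2) < 0" .
  moreover have "0 \<le> c\<^sup>2 * (a * (- a / c) + b * (- a / c)\<^sup>2)"
    using assms[of "- a / c"] by simp
  ultimately show False by linarith
qed

text \<open>The minimum of the Rayleigh quotient on the unit sphere is an eigenvalue (first-order
  condition), hence the smallest one.\<close>

lemma lam_min_attained:
  fixes P :: "real^'k^'k"
  assumes "sym_pd P"
  obtains v where "norm v = 1" "P *v v = lam_min P *\<^sub>R v"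
    and "\<And>w. lam_min P * (norm w)\<^sup>2 \<le> w \<bullet> (P *v w)"
proof -
  define Q where "Q w = w \<bullet> (P *v w)" for w :: "real^'k"
  have "continuous_on UNIV Q"
    unfolding Q_def by (intro continuous_intros linear_continuous_on matrix_vector_mul_bounded_linear)
  moreover have "sphere (0::real^'k) 1 \<noteq> {}"
    by (metis norm_axis_1 mem_sphere_0 empty_iff)
  ultimately obtain v where v: "norm v = 1" and v_min: "\<And>u. norm u = 1 \<Longrightarrow> Q v \<le> Q u"
    using continuous_attains_inf[OF compact_sphere, of 0 1 Q] continuous_on_subset by force
  define m where "m = Q v"
  have Q_scale: "Q (c *\<^sub>R w) = c\<^sup>2 * Q w" for c w
    by (simp add: Q_def matrix_vector_mult_scaleR power2_eq_square)
  have rayleigh: "m * (norm w)\<^sup>2 \<le> Q w" for w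
  proof (cases "w = 0")
    case False
    have "m \<le> Q ((1 / norm w) *\<^sub>R w)"
      unfolding m_def using False by (intro v_min) simp
    then show ?thesis
      using False by (simp add: Q_scale power2_eq_square field_simps)
  qed (simp add: Q_def)
  have "2 * (w \<bullet> (P *v v - m *\<^sub>R v)) = 0" for w
  proof (rule nonneg_quadratic_linear_coeff_eq_0)
    fix t :: real
    have "(norm (v + t *\<^sub>R w))\<^sup>2 = (norm v)\<^sup>2 + 2 * t * (v \<bullet> w) + t\<^sup>2 * (norm w)\<^sup>2"
      unfolding power2_norm_eq_inner
      by (simp add: inner_add_left inner_add_right inner_commute power2_eq_square algebra_simps)
    moreover have "Q (v + t *\<^sub>R w) = m + 2 * t * ((P *v v) \<bullet> w) + t\<^sup>2 * Q w"
      using quadratic_form_add[OF sym_pd_transpose[OF assms], of v "t *\<^sub>R w"]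
      by (simp add: Q_def m_def matrix_vector_mult_scaleR power2_eq_square)
    ultimately show "0 \<le> 2 * (w \<bullet> (P *v v - m *\<^sub>R v)) * t + (Q w - m * (norm w)\<^sup>2) * t\<^sup>2"
      using rayleigh[of "v + t *\<^sub>R w"] v
      by (simp add: inner_diff_right inner_commute algebra_simps)
  qed
  from this[of "P *v v - m *\<^sub>R v"] have eigen: "P *v v = m *\<^sub>R v"
    by simp
  have "lam_min P = m"
    unfolding lam_min_def
  proof (rule cInf_eq_minimum)
    show "m \<in> eigvals P"
      unfolding eigvals_def using eigen v by (intro CollectI exI[of _ v]) auto
    fix \<mu> assume "\<mu> \<in> eigvals P"
    then obtain u where "u \<noteq> 0" "P *v u = \<mu> *\<^sub>R u"
      by (auto simp: eigvals_def)
    then show "m \<le> \<mu>"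
      using rayleigh[of u] by (simp add: Q_def power2_norm_eq_inner)
  qed
  then show thesis
    using that v eigen rayleigh by (simp add: Q_def)
qed

lemma lam_min_quadratic_le: "sym_pd P \<Longrightarrow> lam_min P * (norm w)\<^sup>2 \<le> w \<bullet> (P *v w)"
  by (metis lam_min_attained)

lemma lam_min_pos:
  assumes "sym_pd P"
  shows "0 < lam_min P"
proof -
  obtain v where "norm v = 1" "P *v v = lam_min P *\<^sub>R v"
    using lam_min_attained[OF assms] by blast
  moreover have "0 < v \<bullet> (P *v v)"
    using assms \<open>norm v = 1\<close> unfolding sym_pd_def by (metis norm_zero zero_neq_one)
  ultimately show ?thesis
    by (simp add: power2_norm_eq_inner[symmetric])
qed

lemma sqrt_lam_min_le_pnorm:
  assumes "sym_pd P"
  shows "sqrt (lam_min P) * norm v \<le> pnorm P v"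
proof -
  have "sqrt (lam_min P) * norm v = sqrt (lam_min P * (norm v)\<^sup>2)"
    by (simp add: real_sqrt_mult)
  also have "\<dots> \<le> pnorm P v"
    unfolding pnorm_def by (intro real_sqrt_le_mono lam_min_quadratic_le[OF assms])
  finally show ?thesis .
qed

lemma stack_nth [simp]: "stack x l $ Inl a = x $ a" "stack x l $ Inr b = l $ b"
  by (simp_all add: stack_def)

lemma stack_split: "w = stack (\<chi> a. w $ Inl a) (\<chi> b. w $ Inr b)"
  by (simp add: stack_def vec_eq_iff split: sum.split)

lemma stack_zero [simp]: "stack 0 0 = 0"
  by (simp add: stack_def vec_eq_iff split: sum.split)

lemma stack_diff: "stack a b - stack c d = stack (a - c) (b - d)"
  by (simp add: stack_def vec_eq_iff split: sum.split)

lemma sum_UNIV_sum_type: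
  fixes g :: "'a::finite + 'b::finite \<Rightarrow> real"
  shows "sum g UNIV = (\<Sum>a\<in>UNIV. g (Inl a)) + (\<Sum>b\<in>UNIV. g (Inr b))"
  using sum.Plus[of UNIV UNIV g] by (simp add: UNIV_Plus_UNIV)

lemma inner_stack: "stack a b \<bullet> stack c d = a \<bullet> c + b \<bullet> d"
  by (simp add: inner_vec_def sum_UNIV_sum_type)

lemma norm_stack_sq: "(norm (stack a b))\<^sup>2 = (norm a)\<^sup>2 + (norm b)\<^sup>2"
  by (simp add: power2_norm_eq_inner inner_stack)

lemma blockdiag_mult_stack: "blockdiag P Q *v stack a b = stack (P *v a) (Q *v b)"
  unfolding vec_eq_iff
proof
  fix i
  show "(blockdiag P Q *v stack a b) $ i = stack (P *v a) (Q *v b) $ i"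
    by (cases i) (simp_all add: matrix_vector_mult_def blockdiag_def sum_UNIV_sum_type stack_def)
qed

lemma quadratic_blockdiag_stack:
  "stack a b \<bullet> (blockdiag P Q *v stack a b) = a \<bullet> (P *v a) + b \<bullet> (Q *v b)"
  by (simp add: blockdiag_mult_stack inner_stack)

lemma sym_pd_blockdiag:
  assumes "sym_pd P" "sym_pd Q"
  shows "sym_pd (blockdiag P Q)"
  unfolding sym_pd_def
proof safe
  show "transpose (blockdiag P Q) = blockdiag P Q"
    using assms by (auto simp: sym_pd_def transpose_def blockdiag_def vec_eq_iff split: sum.split)
  fix w :: "real^('a + 'b)"
  assume "w \<noteq> 0"
  obtain a b where w: "w = stack a b"
    using stack_split by blast
  with \<open>w \<noteq> 0\<close> have "a \<noteq> 0 \<or> b \<noteq> 0"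
    by auto
  then show "0 < w \<bullet> (blockdiag P Q *v w)"
    using assms sym_pd_quadratic_nonneg[OF assms(1), of a] sym_pd_quadratic_nonneg[OF assms(2), of b]
    unfolding w quadratic_blockdiag_stack sym_pd_def by (auto simp: add_pos_nonneg add_nonneg_pos)
qed

lemma lam_min_blockdiag_le:
  assumes "sym_pd P" "sym_pd Q"
  shows "lam_min (blockdiag P Q) \<le> lam_min P"
proof -
  obtain v where v: "norm v = 1" "P *v v = lam_min P *\<^sub>R v"
    using lam_min_attained[OF assms(1)] by blast
  show ?thesis
    using lam_min_quadratic_le[OF sym_pd_blockdiag[OF assms], of "stack v 0"] v by (simp add: norm_stack_sq quadratic_blockdiag_stack power2_norm_eq_inner[symmetric])
qed

lemma pnorm_blockdiag_stack_ge:
  assumes "sym_pd P" "sym_pd Q"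
  shows "sqrt (lam_min P) * norm a \<le> pnorm (blockdiag P Q) (stack a b)"
proof -
  have "sqrt (lam_min P) * norm a \<le> pnorm P a"
    by (rule sqrt_lam_min_le_pnorm[OF assms(1)])
  also have "\<dots> \<le> pnorm (blockdiag P Q) (stack a b)"
    unfolding pnorm_def quadratic_blockdiag_stack
    using sym_pd_quadratic_nonneg[OF assms(2)] by simp
  finally show ?thesis .
qed

section \<open>Gradients and strong convexity\<close>

lemma grad_eqI:
  fixes f :: "'a::euclidean_space \<Rightarrow> real"
  assumes "(f has_derivative (\<lambda>v. D \<bullet> v)) (at x)"
  shows "grad f x = D"
  unfolding grad_def
proof (rule the_equality)
  fix D' assume "(f has_derivative (\<lambda>v. D' \<bullet> v)) (at x)"
  then have "(\<lambda>v. D' \<bullet> v) = (\<lambda>v. D \<bullet> v)"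
    using assms by (rule has_derivative_unique)
  then show "D' = D"
    by (metis vector_eq_rdot)
qed (rule assms)

lemma has_derivative_grad:
  fixes f :: "'a::euclidean_space \<Rightarrow> real"
  assumes "f differentiable (at x)"
  shows "(f has_derivative (\<lambda>v. grad f x \<bullet> v)) (at x)"
proof -
  obtain f' where f': "(f has_derivative f') (at x)"
    using assms by (auto simp: differentiable_def)
  define D where "D = (\<Sum>i\<in>Basis. f' i *\<^sub>R i)"
  have "linear f'"
    using f' by (simp add: has_derivative_linear)
  then have "f' v = D \<bullet> v" for v
    unfolding D_def inner_sum_left
    using Linear_Algebra.linear_componentwise[of f' v 1] by (simp add: inner_commute mult.commute)
  then have "(f has_derivative (\<lambda>v. D \<bullet> v)) (at x)"
    using f' by (metis ext)
  then show ?thesis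
    by (simp add: grad_eqI)
qed

lemma has_real_derivative_along_line:
  fixes f :: "'a::real_normed_vector \<Rightarrow> real"
  assumes "(f has_derivative f') (at (x + t *\<^sub>R d))"
  shows "((\<lambda>s. f (x + s *\<^sub>R d)) has_real_derivative f' d) (at t)"
proof -
  have "((\<lambda>s. x + s *\<^sub>R d) has_derivative (\<lambda>s. s *\<^sub>R d)) (at t)"
    by (auto intro!: derivative_eq_intros)
  from has_derivative_compose[OF this assms]
  have "((\<lambda>s. f (x + s *\<^sub>R d)) has_derivative (\<lambda>s. f' (s *\<^sub>R d))) (at t)" .
  moreover have "(\<lambda>s. f' (s *\<^sub>R d)) = (*) (f' d)"
    using has_derivative_linear[OF assms] by (simp add: linear_scale fun_eq_iff)
  ultimately show ?thesis
    by (simp add: has_field_derivative_def)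
qed

lemma has_derivative_difference_quotient:
  fixes S :: "'a::real_normed_vector \<Rightarrow> real"
  assumes "(S has_derivative S') (at p)"
  shows "((\<lambda>t. (S (p + t *\<^sub>R v) - S p) / t) \<longlongrightarrow> S' v) (at_right 0)"
proof -
  have "((\<lambda>t. S (p + t *\<^sub>R v)) has_real_derivative S' v) (at 0)"
    using assms by (intro has_real_derivative_along_line) simp
  then have "((\<lambda>t. (S (p + t *\<^sub>R v) - S p) / t) \<longlongrightarrow> S' v) (at 0)"
    by (simp add: has_field_derivative_iff)
  then show ?thesis
    by (rule tendsto_mono[OF at_le, rotated]) simp
qed

lemma convex_on_gradient_ineq:
  fixes f :: "'a::real_inner \<Rightarrow> real"
  assumes "convex_on UNIV f" and "(f has_derivative (\<lambda>v. D \<bullet> v)) (at x)"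
  shows "f x + D \<bullet> (z - x) \<le> f z"
proof -
  have "eventually (\<lambda>t. t \<in> {0<..<1}) (at_right (0::real))"
    by (rule eventually_at_right_real) simp
  then have "eventually (\<lambda>t. (f (x + t *\<^sub>R (z - x)) - f x) / t \<le> f z - f x) (at_right 0)"
  proof eventually_elim
    fix t :: real assume t: "t \<in> {0<..<1}"
    have "f ((1 - t) *\<^sub>R x + t *\<^sub>R z) \<le> (1 - t) * f x + t * f z"
      using t assms(1) by (intro convex_onD) auto
    moreover have "(1 - t) *\<^sub>R x + t *\<^sub>R z = x + t *\<^sub>R (z - x)"
      by (simp add: algebra_simps)
    ultimately have "f (x + t *\<^sub>R (z - x)) - f x \<le> t * (f z - f x)"
      by (simp add: algebra_simps)
    then show "(f (x + t *\<^sub>R (z - x)) - f x) / t \<le> f z - f x"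
      using t by (simp add: divide_le_eq mult.commute)
  qed
  with has_derivative_difference_quotient[OF assms(2)] have "D \<bullet> (z - x) \<le> f z - f x"
    by (intro tendsto_upperbound) auto
  then show ?thesis by simp
qed

lemma lipschitz_gradient_descent:
  fixes f :: "'a::euclidean_space \<Rightarrow> real"
  assumes diff: "\<forall>x. f differentiable (at x)"
    and lip: "\<forall>x z. norm (grad f x - grad f z) \<le> L * norm (x - z)"
  shows "f z \<le> f x + grad f x \<bullet> (z - x) + L / 2 * (norm (z - x))\<^sup>2"
proof -
  define d where "d = z - x"
  define k where "k t = f (x + t *\<^sub>R d) - t * (grad f x \<bullet> d) - L / 2 * t\<^sup>2 * (norm d)\<^sup>2" for t
  have "k 1 \<le> k 0"
  proof (rule DERIV_nonpos_imp_nonincreasing[of 0 1 k])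
    fix t :: real assume "0 \<le> t" "t \<le> 1"
    have "(grad f (x + t *\<^sub>R d) - grad f x) \<bullet> d \<le> norm (grad f (x + t *\<^sub>R d) - grad f x) * norm d"
      by (rule norm_cauchy_schwarz)
    also have "\<dots> \<le> L * norm (t *\<^sub>R d) * norm d"
      using lip[rule_format, of "x + t *\<^sub>R d" x] by (intro mult_right_mono) auto
    also have "\<dots> = L * t * (norm d)\<^sup>2"
      using \<open>0 \<le> t\<close> by (simp add: power2_eq_square)
    finally have "grad f (x + t *\<^sub>R d) \<bullet> d - grad f x \<bullet> d - L * t * (norm d)\<^sup>2 \<le> 0"
      by (simp add: inner_diff_left)
    moreover have dline: "((\<lambda>s. f (x + s *\<^sub>R d)) has_real_derivative grad f (x + t *\<^sub>R d) \<bullet> d) (at t)"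
      using has_real_derivative_along_line[OF has_derivative_grad[OF diff[rule_format]]] by simp
    have dlin: "((\<lambda>s. s * (grad f x \<bullet> d)) has_real_derivative grad f x \<bullet> d) (at t)"
      by (auto intro!: derivative_eq_intros)
    have dquad: "((\<lambda>s. L / 2 * s\<^sup>2 * (norm d)\<^sup>2) has_real_derivative L * t * (norm d)\<^sup>2) (at t)"
      by (auto intro!: derivative_eq_intros)
    have "(k has_real_derivative
        grad f (x + t *\<^sub>R d) \<bullet> d - grad f x \<bullet> d - L * t * (norm d)\<^sup>2) (at t)"
      unfolding k_def[abs_def] by (rule DERIV_diff[OF DERIV_diff[OF dline dlin] dquad])
    ultimately show "\<exists>y. (k has_real_derivative y) (at t) \<and> y \<le> 0"
      by blast
  qed simp
  moreover have "x + 1 *\<^sub>R d = z"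
    by (simp add: d_def)
  ultimately show ?thesis
    unfolding k_def by (simp add: d_def)
qed

lemma power2_norm_add: "(norm (a + b))\<^sup>2 = (norm a)\<^sup>2 + 2 * (a \<bullet> b) + (norm (b::'a::real_inner))\<^sup>2"
  using dot_norm[of a b] by simp

definition strongly_convex_with_gradient :: "real \<Rightarrow> ('a::real_inner \<Rightarrow> real) \<Rightarrow> ('a \<Rightarrow> 'a) \<Rightarrow> bool"
  where "strongly_convex_with_gradient \<mu> S G \<longleftrightarrow>
    (\<forall>x. (S has_derivative (\<lambda>v. G x \<bullet> v)) (at x)) \<and>
    (\<forall>x z. S x + G x \<bullet> (z - x) + \<mu> / 2 * (norm (z - x))\<^sup>2 \<le> S z)"

lemma strongly_convex_with_gradientI:
  assumes "\<And>x. (S has_derivative (\<lambda>v. G x \<bullet> v)) (at x)"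
    and "\<And>x z. S x + G x \<bullet> (z - x) + \<mu> / 2 * (norm (z - x))\<^sup>2 \<le> S z"
  shows "strongly_convex_with_gradient \<mu> S G"
  using assms by (simp add: strongly_convex_with_gradient_def)

lemma strongly_convex_with_gradientD:
  assumes "strongly_convex_with_gradient \<mu> S G"
  shows "(S has_derivative (\<lambda>v. G x \<bullet> v)) (at x)"
    and "S x + G x \<bullet> (z - x) + \<mu> / 2 * (norm (z - x))\<^sup>2 \<le> S z"
  using assms by (simp_all add: strongly_convex_with_gradient_def)

lemma strongly_convex_with_gradient_add:
  assumes "strongly_convex_with_gradient \<mu> S G" "strongly_convex_with_gradient \<nu> T H"
  shows "strongly_convex_with_gradient (\<mu> + \<nu>) (\<lambda>x. S x + T x) (\<lambda>x. G x + H x)"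
proof (rule strongly_convex_with_gradientI)
  fix x
  show "((\<lambda>x. S x + T x) has_derivative (\<lambda>v. (G x + H x) \<bullet> v)) (at x)"
    using has_derivative_add[OF assms[THEN strongly_convex_with_gradientD(1)]]
    by (simp add: inner_add_left)
  fix z
  show "S x + T x + (G x + H x) \<bullet> (z - x) + (\<mu> + \<nu>) / 2 * (norm (z - x))\<^sup>2 \<le> S z + T z"
    using assms[THEN strongly_convex_with_gradientD(2), of x z]
    by (simp add: inner_add_left add_divide_distrib distrib_right)
qed

lemma strongly_convex_with_gradient_inner:
  "strongly_convex_with_gradient 0 (\<lambda>x. c \<bullet> x) (\<lambda>_. c)"
  by (rule strongly_convex_with_gradientI) (auto intro!: derivative_eq_intros simp: inner_diff_right)

lemma strongly_convex_with_gradient_norm_sq: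
  "strongly_convex_with_gradient c (\<lambda>x. c / 2 * (norm (x - w))\<^sup>2) (\<lambda>x. c *\<^sub>R (x - w))"
proof (rule strongly_convex_with_gradientI)
  fix x
  show "((\<lambda>x. c / 2 * (norm (x - w))\<^sup>2) has_derivative (\<lambda>v. c *\<^sub>R (x - w) \<bullet> v)) (at x)"
    unfolding power2_norm_eq_inner
    by (auto intro!: derivative_eq_intros simp: inner_commute algebra_simps)
  fix z
  have expand: "(norm (z - w))\<^sup>2 = (norm (x - w))\<^sup>2 + 2 * ((x - w) \<bullet> (z - x)) + (norm (z - x))\<^sup>2"
    unfolding power2_norm_eq_inner by (simp add: inner_diff_left inner_diff_right inner_commute)
  show "c / 2 * (norm (x - w))\<^sup>2 + c *\<^sub>R (x - w) \<bullet> (z - x) + c / 2 * (norm (z - x))\<^sup>2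
      \<le> c / 2 * (norm (z - w))\<^sup>2"
    unfolding expand by (simp add: algebra_simps)
qed

lemma strongly_convex_with_gradient_pnorm_sq:
  fixes P :: "real^'k^'k"
  assumes "sym_pd P" "0 < \<sigma>"
  shows "strongly_convex_with_gradient (lam_min P / \<sigma>)
    (\<lambda>x. (pnorm P (x - a))\<^sup>2 / (2 * \<sigma>)) (\<lambda>x. (1 / \<sigma>) *\<^sub>R (P *v (x - a)))"
proof (rule strongly_convex_with_gradientI)
  have sym: "transpose P = P"
    using assms(1) by (rule sym_pd_transpose)
  fix x
  have shift: "((\<lambda>x. x - a) has_derivative (\<lambda>v. v)) (at x)"
    by (auto intro!: derivative_eq_intros)
  have "((\<lambda>x. P *v (x - a)) has_derivative (\<lambda>v. P *v v)) (at x)"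
    using bounded_linear.has_derivative[OF matrix_vector_mul_bounded_linear[of P] shift] by simp
  from has_derivative_inner[OF shift this]
  have "((\<lambda>x. (x - a) \<bullet> (P *v (x - a))) has_derivative
      (\<lambda>v. (x - a) \<bullet> (P *v v) + v \<bullet> (P *v (x - a)))) (at x)"
    by simp
  from has_derivative_mult_left[OF this, of "inverse (2 * \<sigma>)"]
  have "((\<lambda>x. (x - a) \<bullet> (P *v (x - a)) / (2 * \<sigma>)) has_derivative
      (\<lambda>v. ((x - a) \<bullet> (P *v v) + v \<bullet> (P *v (x - a))) / (2 * \<sigma>))) (at x)"
    by (simp only: divide_inverse)
  moreover have "((x - a) \<bullet> (P *v v) + v \<bullet> (P *v (x - a))) / (2 * \<sigma>) = (1 / \<sigma>) *\<^sub>R (P *v (x - a)) \<bullet> v" for v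
  proof -
    have "(x - a) \<bullet> (P *v v) + v \<bullet> (P *v (x - a)) = 2 * ((P *v (x - a)) \<bullet> v)"
      using symmetric_matrix_inner[OF sym, of "x - a" v] inner_commute[of v] by simp
    then show ?thesis
      by simp
  qed
  ultimately show "((\<lambda>x. (pnorm P (x - a))\<^sup>2 / (2 * \<sigma>)) has_derivative
      (\<lambda>v. (1 / \<sigma>) *\<^sub>R (P *v (x - a)) \<bullet> v)) (at x)"
    by (simp add: pnorm_sq[OF assms(1)])
  fix z
  have "(z - a) \<bullet> (P *v (z - a)) = (x - a) \<bullet> (P *v (x - a)) + 2 * ((P *v (x - a)) \<bullet> (z - x))
      + (z - x) \<bullet> (P *v (z - x))"
    using quadratic_form_add[OF sym, of "x - a" "z - x"] by simp
  moreover have "lam_min P * (norm (z - x))\<^sup>2 \<le> (z - x) \<bullet> (P *v (z - x))"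
    by (rule lam_min_quadratic_le[OF assms(1)])
  ultimately show "(pnorm P (x - a))\<^sup>2 / (2 * \<sigma>) + (1 / \<sigma>) *\<^sub>R (P *v (x - a)) \<bullet> (z - x)
      + lam_min P / \<sigma> / 2 * (norm (z - x))\<^sup>2 \<le> (pnorm P (z - a))\<^sup>2 / (2 * \<sigma>)"
    using \<open>0 < \<sigma>\<close> by (simp add: pnorm_sq[OF assms(1)] field_simps)
qed

section \<open>Minimising a strongly convex function plus a closed convex one\<close>

lemma proper_closed_convexD:
  assumes "proper_closed_convex g"
  shows "g x \<noteq> -\<infinity>" "\<exists>x. g x \<noteq> \<infinity>"
    and "convex {(x, t::real). g x \<le> ereal t}" "closed {(x, t::real). g x \<le> ereal t}"
  using assms by (simp_all add: proper_closed_convex_def)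

lemma subgrad_affine_minorant:
  assumes "v \<in> subgrad g x0"
  obtains c where "\<And>z. ereal (v \<bullet> z - c) \<le> g z"
proof -
  obtain r where r: "g x0 = ereal r"
    using assms by (cases "g x0") (auto simp: subgrad_def)
  have "ereal (v \<bullet> z - (v \<bullet> x0 - r)) \<le> g z" for z
    using assms r by (auto simp: subgrad_def inner_diff_right algebra_simps dest: spec[of _ z])
  then show thesis
    using that by blast
qed

lemma convex_epigraph_affine_piece:
  fixes c :: ereal
  shows "convex {(l, t::real). ereal (u \<bullet> l) - c \<le> ereal t}"
    and "closed {(l, t::real). ereal (u \<bullet> l) - c \<le> ereal t}"
proof -
  have "{(l, t::real). ereal (u \<bullet> l) - c \<le> ereal t} \<in> {UNIV, {}, {p. (u, -1) \<bullet> p \<le> real_of_ereal c}}"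
    by (cases c) (auto simp: inner_Pair)
  then show "convex {(l, t::real). ereal (u \<bullet> l) - c \<le> ereal t}"
    and "closed {(l, t::real). ereal (u \<bullet> l) - c \<le> ereal t}"
    by (auto simp: convex_halfspace_le closed_halfspace_le)
qed

lemma proper_closed_convex_fconj:
  assumes "\<bar>fconj h l0\<bar> \<noteq> \<infinity>"
  shows "proper_closed_convex (fconj h)"
  unfolding proper_closed_convex_def
proof safe
  have "-\<infinity> < fconj h l0"
    using assms by auto
  then obtain u where "-\<infinity> < ereal (u \<bullet> l0) - h u"
    by (auto simp: fconj_def less_SUP_iff)
  then have "h u \<noteq> \<infinity>"
    by auto
  fix l assume "fconj h l = -\<infinity>"
  moreover have "ereal (u \<bullet> l) - h u \<le> fconj h l"
    unfolding fconj_def by (rule SUP_upper) simp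
  ultimately show False
    using \<open>h u \<noteq> \<infinity>\<close> by (cases "h u") auto
next
  show "\<exists>l. fconj h l \<noteq> \<infinity>"
    using assms by (intro exI[of _ l0]) auto
next
  have epi: "{(l, t::real). fconj h l \<le> ereal t} = (\<Inter>u. {(l, t). ereal (u \<bullet> l) - h u \<le> ereal t})"
    by (auto simp: fconj_def SUP_le_iff)
  show "convex {(l, t::real). fconj h l \<le> ereal t}"
    unfolding epi by (intro convex_INT convex_epigraph_affine_piece)
  show "closed {(l, t::real). fconj h l \<le> ereal t}"
    unfolding epi by (intro closed_INT ballI convex_epigraph_affine_piece)
qed

lemma closed_epigraph_add_continuous:
  fixes g :: "'a::real_normed_vector \<Rightarrow> ereal"
  assumes "closed {(x, t::real). g x \<le> ereal t}" "continuous_on UNIV S"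
  shows "closed {(x, t::real). ereal (S x) + g x \<le> ereal t}"
proof -
  have "ereal s + y \<le> ereal t \<longleftrightarrow> y \<le> ereal (t - s)" for s t y
    by (cases y) auto
  then have eq: "{(x, t::real). ereal (S x) + g x \<le> ereal t} =
      (\<lambda>p. (fst p, snd p - S (fst p))) -` {(x, t::real). g x \<le> ereal t}"
    by auto
  have "continuous_on UNIV (\<lambda>p::'a \<times> real. (fst p, snd p - S (fst p)))"
    by (intro continuous_intros continuous_on_compose2[OF assms(2)]) auto
  then show ?thesis
    unfolding eq by (rule closed_vimage[OF assms(1)])
qed

lemma convex_epigraph_ineq:
  fixes g :: "'a::real_vector \<Rightarrow> ereal"
  assumes "convex {(x, t::real). g x \<le> ereal t}" "g x \<le> ereal a" "g y \<le> ereal b" "0 \<le> t" "t \<le> 1"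
  shows "g ((1 - t) *\<^sub>R x + t *\<^sub>R y) \<le> ereal ((1 - t) * a + t * b)"
proof -
  have "(1 - t) *\<^sub>R (x, a) + t *\<^sub>R (y, b) \<in> {(x, t::real). g x \<le> ereal t}"
    using assms by (intro convexD[OF assms(1)]) auto
  then show ?thesis
    by simp
qed

lemma quadratic_sublevel_bound:
  fixes c K K0 r v :: real
  assumes "0 < c" "0 \<le> r" "c * r\<^sup>2 - K * r - K0 \<le> v"
  shows "r \<le> max 1 ((\<bar>K\<bar> + \<bar>K0\<bar> + \<bar>v\<bar>) / c)"
proof (cases "r \<le> 1")
  case False
  have "K * r \<le> \<bar>K\<bar> * r"
    using assms(2) by (intro mult_right_mono) auto
  moreover have "(\<bar>K0\<bar> + \<bar>v\<bar>) * 1 \<le> (\<bar>K0\<bar> + \<bar>v\<bar>) * r"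
    using False by (intro mult_left_mono) auto
  ultimately have "c * r * r \<le> (\<bar>K\<bar> + \<bar>K0\<bar> + \<bar>v\<bar>) * r"
    using assms(3) abs_ge_self[of K0] abs_ge_self[of v] by (simp add: power2_eq_square algebra_simps)
  then have "c * r \<le> \<bar>K\<bar> + \<bar>K0\<bar> + \<bar>v\<bar>"
    using False by simp
  then have "r \<le> (\<bar>K\<bar> + \<bar>K0\<bar> + \<bar>v\<bar>) / c"
    using assms(1) by (simp add: pos_le_divide_eq mult.commute)
  then show ?thesis
    by simp
qed simp

lemma compact_epigraph_sublevel:
  fixes \<Phi> :: "'a::euclidean_space \<Rightarrow> ereal"
  assumes closed: "closed {(x, t::real). \<Phi> x \<le> ereal t}"
    and minorant: "\<And>x. ereal (c * (norm x)\<^sup>2 - K * norm x - K0) \<le> \<Phi> x" and "0 < c"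
  shows "compact ({(x, t::real). \<Phi> x \<le> ereal t} \<inter> {p. snd p \<le> v})"
    (is "compact ?T")
proof -
  define R where "R = max 1 ((\<bar>K\<bar> + \<bar>K0\<bar> + \<bar>v\<bar>) / c)"
  have T_bound: "norm x \<le> R" "- (\<bar>K\<bar> * R + \<bar>K0\<bar>) \<le> t" if "(x, t) \<in> ?T" for x t
  proof -
    have "\<Phi> x \<le> ereal t"
      using that by simp
    from order_trans[OF minorant[of x] this] have "c * (norm x)\<^sup>2 - K * norm x - K0 \<le> t"
      by simp
    then show "norm x \<le> R"
      unfolding R_def using that \<open>0 < c\<close> by (intro quadratic_sublevel_bound) auto
    have "K * norm x \<le> \<bar>K\<bar> * norm x"
      by (intro mult_right_mono) auto
    also have "\<dots> \<le> \<bar>K\<bar> * R"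
      using \<open>norm x \<le> R\<close> by (intro mult_left_mono) auto
    finally have "K * norm x \<le> \<bar>K\<bar> * R" .
    moreover have "0 \<le> c * (norm x)\<^sup>2"
      using \<open>0 < c\<close> by simp
    ultimately show "- (\<bar>K\<bar> * R + \<bar>K0\<bar>) \<le> t"
      using \<open>c * (norm x)\<^sup>2 - K * norm x - K0 \<le> t\<close> abs_ge_self[of K0] by linarith
  qed
  have "norm p \<le> R + (\<bar>K\<bar> * R + \<bar>K0\<bar> + \<bar>v\<bar>)" if "p \<in> ?T" for p
  proof -
    obtain x t where p: "p = (x, t)" by fastforce
    have "0 \<le> \<bar>K\<bar> * R"
      by (simp add: R_def)
    then have "\<bar>t\<bar> \<le> \<bar>K\<bar> * R + \<bar>K0\<bar> + \<bar>v\<bar>"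
      using T_bound(2)[of x t] that abs_ge_self[of v] abs_ge_zero[of K0] abs_ge_zero[of v]
      unfolding p abs_le_iff by auto
    then show ?thesis
      using T_bound(1)[of x t] that norm_Pair_le[of x t] by (simp add: p)
  qed
  then have "bounded ?T"
    unfolding bounded_iff by blast
  moreover have "closed ?T"
    by (intro closed_Int closed closed_Collect_le continuous_intros)
  ultimately show ?thesis
    by (simp add: compact_eq_bounded_closed)
qed

text \<open>A lower semicontinuous function with a coercive quadratic minorant attains its minimum:
  minimise the height over the compact part of the epigraph below a finite value.\<close>

lemma coercive_attains_min:
  fixes \<Phi> :: "'a::euclidean_space \<Rightarrow> ereal"
  assumes closed: "closed {(x, t::real). \<Phi> x \<le> ereal t}"
    and fin: "\<Phi> x0 \<noteq> \<infinity>"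
    and minorant: "\<And>x. ereal (c * (norm x)\<^sup>2 - K * norm x - K0) \<le> \<Phi> x"
    and "0 < c"
  obtains p where "\<And>z. \<Phi> p \<le> \<Phi> z"
proof -
  obtain v0 where v0: "\<Phi> x0 = ereal v0"
    using fin minorant[of x0] by (cases "\<Phi> x0") auto
  define T where "T = {(x, t::real). \<Phi> x \<le> ereal t} \<inter> {p. snd p \<le> v0}"
  have "compact T"
    unfolding T_def using closed minorant \<open>0 < c\<close> by (rule compact_epigraph_sublevel)
  moreover have "(x0, v0) \<in> T"
    using v0 by (simp add: T_def)
  ultimately obtain q where q: "q \<in> T" and q_min: "\<And>p. p \<in> T \<Longrightarrow> snd q \<le> snd p"
    using continuous_attains_inf[of T snd] continuous_on_snd[OF continuous_on_id] by blast
  have "\<Phi> (fst q) \<le> ereal (snd q)" "snd q \<le> v0"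
    using q by (auto simp: T_def)
  have "\<Phi> (fst q) \<le> \<Phi> z" for z
  proof (cases "\<Phi> z \<le> ereal v0")
    case True
    then obtain r where r: "\<Phi> z = ereal r"
      using minorant[of z] by (cases "\<Phi> z") auto
    with True have "snd q \<le> r"
      by (intro q_min[of "(z, r)", simplified]) (simp add: T_def)
    then show ?thesis
      using \<open>\<Phi> (fst q) \<le> ereal (snd q)\<close> r by (metis ereal_less_eq(3) order.trans)
  next
    case False
    have "\<Phi> (fst q) \<le> ereal v0"
      using \<open>\<Phi> (fst q) \<le> ereal (snd q)\<close> \<open>snd q \<le> v0\<close> by (metis ereal_less_eq(3) order.trans)
    then show ?thesis
      using False by simp
  qed
  then show thesis
    using that by blast
qed

text \<open>First-order optimality for \<open>S + g\<close>: the difference quotients of \<open>S\<close> along a segment are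
  bounded below by those of the convex part.\<close>

lemma argmin_neg_gradient_in_subgrad:
  fixes g :: "'a::real_inner \<Rightarrow> ereal"
  assumes cvx: "convex {(x, t::real). g x \<le> ereal t}" and ninf: "\<And>x. g x \<noteq> -\<infinity>"
    and fin: "g p \<noteq> \<infinity>"
    and deriv: "(S has_derivative (\<lambda>v. D \<bullet> v)) (at p)"
    and min: "\<And>z. ereal (S p) + g p \<le> ereal (S z) + g z"
  shows "- D \<in> subgrad g p"
proof -
  obtain gp where gp: "g p = ereal gp"
    using fin ninf[of p] by (cases "g p") auto
  have "g p + ereal (- D \<bullet> (z - p)) \<le> g z" for z
  proof (cases "g z")
    case (real b)
    have "eventually (\<lambda>t. t \<in> {0<..<1}) (at_right (0::real))"
      by (rule eventually_at_right_real) simp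
    then have "eventually (\<lambda>t. gp - b \<le> (S (p + t *\<^sub>R (z - p)) - S p) / t) (at_right 0)"
    proof eventually_elim
      fix t :: real assume t: "t \<in> {0<..<1}"
      have "p + t *\<^sub>R (z - p) = (1 - t) *\<^sub>R p + t *\<^sub>R z"
        by (simp add: algebra_simps)
      then have "g (p + t *\<^sub>R (z - p)) \<le> ereal ((1 - t) * gp + t * b)"
        using t gp real by (auto intro!: convex_epigraph_ineq[OF cvx])
      from order.trans[OF min[of "p + t *\<^sub>R (z - p)"] add_left_mono[OF this]]
      have "ereal (S p) + g p \<le> ereal (S (p + t *\<^sub>R (z - p))) + ereal ((1 - t) * gp + t * b)" .
      then have "t * (gp - b) \<le> S (p + t *\<^sub>R (z - p)) - S p"
        using gp by (simp add: algebra_simps)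
      then show "gp - b \<le> (S (p + t *\<^sub>R (z - p)) - S p) / t"
        using t by (simp add: le_divide_eq mult.commute)
    qed
    with has_derivative_difference_quotient[OF deriv] have "gp - b \<le> D \<bullet> (z - p)"
      by (intro tendsto_lowerbound) auto
    then show ?thesis
      using gp real by simp
  qed (use ninf in auto)
  then show ?thesis
    using gp by (simp add: subgrad_def)
qed

lemma subgrad_add_strongly_convex:
  assumes S: "strongly_convex_with_gradient \<mu> S G" and v: "v \<in> subgrad g p"
  shows "ereal (S p) + g p + ereal ((G p + v) \<bullet> (z - p) + \<mu> / 2 * (norm (z - p))\<^sup>2)
    \<le> ereal (S z) + g z"
proof -
  obtain gp where gp: "g p = ereal gp"
    using v by (cases "g p") (auto simp: subgrad_def)
  have "ereal (gp + v \<bullet> (z - p)) \<le> g z"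
    using v gp by (auto simp: subgrad_def)
  moreover have "S p + G p \<bullet> (z - p) + \<mu> / 2 * (norm (z - p))\<^sup>2 \<le> S z"
    by (rule strongly_convex_with_gradientD(2)[OF S])
  ultimately have "ereal (S p + G p \<bullet> (z - p) + \<mu> / 2 * (norm (z - p))\<^sup>2) + ereal (gp + v \<bullet> (z - p))
      \<le> ereal (S z) + g z"
    by (intro add_mono) auto
  then show ?thesis
    using gp by (simp add: inner_add_left algebra_simps)
qed

lemma strongly_convex_argmin_subgrad:
  assumes S: "strongly_convex_with_gradient \<mu> S G" and g: "proper_closed_convex g"
    and min: "\<And>z. ereal (S p) + g p \<le> ereal (S z) + g z"
  shows "- G p \<in> subgrad g p"
proof -
  obtain x1 where "g x1 \<noteq> \<infinity>"
    using proper_closed_convexD(2)[OF g] by blast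
  then have "g p \<noteq> \<infinity>"
    using min[of x1] by auto
  then show ?thesis
    using g strongly_convex_with_gradientD(1)[OF S] min
    by (intro argmin_neg_gradient_in_subgrad) (auto simp: proper_closed_convex_def)
qed

lemma strongly_convex_argmin_growth:
  assumes S: "strongly_convex_with_gradient \<mu> S G" and g: "proper_closed_convex g"
    and min: "\<And>z. ereal (S p) + g p \<le> ereal (S z) + g z"
  shows "ereal (S p) + g p + ereal (\<mu> / 2 * (norm (z - p))\<^sup>2) \<le> ereal (S z) + g z"
  using subgrad_add_strongly_convex[OF S strongly_convex_argmin_subgrad[OF S g min], of z] by simp

lemma strongly_convex_has_argmin:
  fixes S :: "'a::euclidean_space \<Rightarrow> real"
  assumes S: "strongly_convex_with_gradient \<mu> S G" and "0 < \<mu>"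
    and g: "proper_closed_convex g" and "v \<in> subgrad g x0"
  obtains p where "\<And>z. ereal (S p) + g p \<le> ereal (S z) + g z"
proof -
  obtain c where c: "\<And>z. ereal (v \<bullet> z - c) \<le> g z"
    using subgrad_affine_minorant[OF \<open>v \<in> subgrad g x0\<close>] by blast
  show thesis
  proof (rule coercive_attains_min)
    have "continuous_on UNIV S"
      by (intro continuous_at_imp_continuous_on ballI
          has_derivative_continuous[OF strongly_convex_with_gradientD(1)[OF S]])
    then show "closed {(x, t::real). ereal (S x) + g x \<le> ereal t}"
      by (intro closed_epigraph_add_continuous proper_closed_convexD(4)[OF g])
    show "ereal (S x0) + g x0 \<noteq> \<infinity>"
      using \<open>v \<in> subgrad g x0\<close> by (auto simp: subgrad_def)
    show "0 < \<mu> / 2"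
      using \<open>0 < \<mu>\<close> by simp
    fix z
    have "S 0 + G 0 \<bullet> z + \<mu> / 2 * (norm z)\<^sup>2 \<le> S z"
      using strongly_convex_with_gradientD(2)[OF S, of 0 z] by simp
    moreover have "- (norm (G 0) * norm z) \<le> G 0 \<bullet> z" "- (norm v * norm z) \<le> v \<bullet> z"
      using norm_cauchy_schwarz[of "- G 0" z] norm_cauchy_schwarz[of "- v" z] by simp_all
    ultimately have "ereal (\<mu> / 2 * (norm z)\<^sup>2 - (norm (G 0) + norm v) * norm z - (c - S 0))
        \<le> ereal (S z) + ereal (v \<bullet> z - c)"
      by (simp add: algebra_simps)
    also have "\<dots> \<le> ereal (S z) + g z"
      using c by (rule add_left_mono)
    finally show "ereal (\<mu> / 2 * (norm z)\<^sup>2 - (norm (G 0) + norm v) * norm z - (c - S 0))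
        \<le> ereal (S z) + g z" .
  qed (rule that)
qed

lemma strongly_convex_ex1_argmin:
  fixes S :: "'a::euclidean_space \<Rightarrow> real"
  assumes S: "strongly_convex_with_gradient \<mu> S G" and "0 < \<mu>"
    and g: "proper_closed_convex g" and "v \<in> subgrad g x0"
  shows "\<exists>!p. \<forall>z. ereal (S p) + g p \<le> ereal (S z) + g z"
proof (rule ex_ex1I)
  show "\<exists>p. \<forall>z. ereal (S p) + g p \<le> ereal (S z) + g z"
    using strongly_convex_has_argmin[OF assms] by blast
next
  fix p q
  assume p: "\<forall>z. ereal (S p) + g p \<le> ereal (S z) + g z"
    and q: "\<forall>z. ereal (S q) + g q \<le> ereal (S z) + g z"
  have "- G p \<in> subgrad g p"
    by (rule strongly_convex_argmin_subgrad[OF S g]) (use p in blast)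
  then obtain gp where gp: "g p = ereal gp"
    by (cases "g p") (auto simp: subgrad_def)
  have "ereal (S p) + g p + ereal (\<mu> / 2 * (norm (q - p))\<^sup>2) \<le> ereal (S q) + g q"
    by (rule strongly_convex_argmin_growth[OF S g]) (use p in blast)
  also have "\<dots> \<le> ereal (S p) + g p"
    using q by blast
  finally have "\<mu> / 2 * (norm (q - p))\<^sup>2 \<le> 0"
    using gp by simp
  then show "p = q"
    using \<open>0 < \<mu>\<close> by (simp add: mult_le_0_iff)
qed

section \<open>The smoothed conjugate \<open>\<psi>\<close>\<close>

lemma ereal_diff_diff_eq_uminus:
  "ereal a - x - ereal b = - (ereal (b - a) + x)"
  by (cases x) auto

text \<open>Only \<open>h\<^sup>*\<close> enters \<open>\<psi>\<close>; a subgradient of \<open>h\<^sup>*\<close> makes it proper, and as a supremum of affine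
  functions it is then closed and convex, so nothing else is assumed about \<open>h\<close>.\<close>

locale conjugate_smoothing =
  fixes h :: "real^'m \<Rightarrow> ereal" and Ml :: "real^'m^'m" and lbar :: "real^'m" and \<sigma> :: real
  assumes conj_subgrad: "\<exists>l. subgrad (fconj h) l \<noteq> {}"
    and Ml_pd: "sym_pd Ml" and \<sigma>_pos: "0 < \<sigma>"
begin

abbreviation \<psi> :: "real^'m \<Rightarrow> real" where
  "\<psi> \<equiv> psi h Ml lbar \<sigma>"

definition dual_obj :: "real^'m \<Rightarrow> real^'m \<Rightarrow> ereal" where
  "dual_obj u l = ereal ((pnorm Ml (l - lbar))\<^sup>2 / (2 * \<sigma>) - u \<bullet> l) + fconj h l"

definition dual_sol :: "real^'m \<Rightarrow> real^'m" where
  "dual_sol u = (THE l. \<forall>z. dual_obj u l \<le> dual_obj u z)"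

lemma conj_proper_closed_convex: "proper_closed_convex (fconj h)"
proof -
  obtain l v where "v \<in> subgrad (fconj h) l"
    using conj_subgrad by blast
  then show ?thesis
    by (intro proper_closed_convex_fconj[of h l]) (simp add: subgrad_def)
qed

lemma dual_obj_strongly_convex:
  "strongly_convex_with_gradient (lam_min Ml / \<sigma>)
     (\<lambda>l. (pnorm Ml (l - lbar))\<^sup>2 / (2 * \<sigma>) - u \<bullet> l) (\<lambda>l. (1 / \<sigma>) *\<^sub>R (Ml *v (l - lbar)) - u)"
  using strongly_convex_with_gradient_add[OF strongly_convex_with_gradient_pnorm_sq[OF Ml_pd \<sigma>_pos]
      strongly_convex_with_gradient_inner[of "- u"]]
  by simp

lemma dual_sol_argmin: "dual_obj u (dual_sol u) \<le> dual_obj u z"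
proof -
  obtain l v where "v \<in> subgrad (fconj h) l"
    using conj_subgrad by blast
  from strongly_convex_ex1_argmin[OF dual_obj_strongly_convex _ conj_proper_closed_convex this]
  have "\<exists>!l. \<forall>z. dual_obj u l \<le> dual_obj u z"
    using lam_min_pos[OF Ml_pd] \<sigma>_pos by (simp add: dual_obj_def)
  then show ?thesis
    unfolding dual_sol_def by (rule theI'[THEN spec])
qed

lemma dual_sol_growth:
  shows "\<bar>fconj h (dual_sol u)\<bar> \<noteq> \<infinity>"
    and "dual_obj u (dual_sol u) + ereal (lam_min Ml / (2 * \<sigma>) * (norm (z - dual_sol u))\<^sup>2)
      \<le> dual_obj u z"
proof -
  have "ereal ((pnorm Ml (dual_sol u - lbar))\<^sup>2 / (2 * \<sigma>) - u \<bullet> dual_sol u) + fconj h (dual_sol u)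
      \<le> ereal ((pnorm Ml (z - lbar))\<^sup>2 / (2 * \<sigma>) - u \<bullet> z) + fconj h z" for z
    using dual_sol_argmin by (simp add: dual_obj_def)
  note min = this
  show "\<bar>fconj h (dual_sol u)\<bar> \<noteq> \<infinity>"
    using strongly_convex_argmin_subgrad[OF dual_obj_strongly_convex conj_proper_closed_convex min]
    by (simp add: subgrad_def)
  show "dual_obj u (dual_sol u) + ereal (lam_min Ml / (2 * \<sigma>) * (norm (z - dual_sol u))\<^sup>2)
      \<le> dual_obj u z"
  proof -
    have "lam_min Ml / \<sigma> / 2 = lam_min Ml / (2 * \<sigma>)"
      by simp
    then show ?thesis
      using strongly_convex_argmin_growth[OF dual_obj_strongly_convex conj_proper_closed_convex min, of z]
      by (simp only: dual_obj_def)
  qed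
qed

lemma psi_eq: "ereal (- \<psi> u) = dual_obj u (dual_sol u)"
proof -
  have "(SUP l. ereal (u \<bullet> l) - fconj h l - ereal ((pnorm Ml (l - lbar))\<^sup>2 / (2 * \<sigma>)))
      = - dual_obj u (dual_sol u)"
  proof (rule antisym)
    show "(SUP l. ereal (u \<bullet> l) - fconj h l - ereal ((pnorm Ml (l - lbar))\<^sup>2 / (2 * \<sigma>)))
        \<le> - dual_obj u (dual_sol u)"
      by (rule SUP_least) (simp add: ereal_diff_diff_eq_uminus dual_obj_def[symmetric] dual_sol_argmin)
    have "- dual_obj u (dual_sol u) = ereal (u \<bullet> dual_sol u) - fconj h (dual_sol u)
        - ereal ((pnorm Ml (dual_sol u - lbar))\<^sup>2 / (2 * \<sigma>))"
      by (simp add: ereal_diff_diff_eq_uminus dual_obj_def)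
    also have "\<dots> \<le> (SUP l. ereal (u \<bullet> l) - fconj h l - ereal ((pnorm Ml (l - lbar))\<^sup>2 / (2 * \<sigma>)))"
      by (rule SUP_upper) simp
    finally show "- dual_obj u (dual_sol u)
        \<le> (SUP l. ereal (u \<bullet> l) - fconj h l - ereal ((pnorm Ml (l - lbar))\<^sup>2 / (2 * \<sigma>)))" .
  qed
  moreover have "\<bar>dual_obj u (dual_sol u)\<bar> \<noteq> \<infinity>"
    using dual_sol_growth(1)[of u] by (auto simp: dual_obj_def)
  ultimately show ?thesis
    by (cases "dual_obj u (dual_sol u)") (auto simp: psi_def)
qed

text \<open>The growth of \<open>dual_obj u'\<close> around its minimiser, evaluated at \<open>dual_sol u\<close>.\<close>

lemma psi_strong_lower:
  "\<psi> u + (u' - u) \<bullet> dual_sol u + lam_min Ml / (2 * \<sigma>) * (norm (dual_sol u - dual_sol u'))\<^sup>2 \<le> \<psi> u'"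
proof -
  define q where "q l = (pnorm Ml (l - lbar))\<^sup>2 / (2 * \<sigma>)" for l
  obtain c where c: "fconj h (dual_sol u) = ereal c"
    using dual_sol_growth(1)[of u] by (cases "fconj h (dual_sol u)") auto
  have "ereal (- \<psi> u) = ereal (q (dual_sol u) - u \<bullet> dual_sol u + c)"
    using psi_eq[of u] c by (simp add: dual_obj_def q_def)
  moreover have "ereal (- \<psi> u') + ereal (lam_min Ml / (2 * \<sigma>) * (norm (dual_sol u - dual_sol u'))\<^sup>2)
      \<le> ereal (q (dual_sol u) - u' \<bullet> dual_sol u) + ereal c"
    using dual_sol_growth(2)[of u' "dual_sol u"] unfolding psi_eq[symmetric]
    by (simp only: dual_obj_def c q_def)
  ultimately show ?thesis
    by (simp add: inner_diff_left)
qed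

lemma psi_gradient_ineq: "\<psi> u + (u' - u) \<bullet> dual_sol u \<le> \<psi> u'"
proof -
  have "0 \<le> lam_min Ml / (2 * \<sigma>) * (norm (dual_sol u - dual_sol u'))\<^sup>2"
    using lam_min_pos[OF Ml_pd] \<sigma>_pos by simp
  then show ?thesis
    using psi_strong_lower[of u u'] by linarith
qed

lemma dual_sol_lipschitz: "norm (dual_sol u - dual_sol u') \<le> \<sigma> / lam_min Ml * norm (u - u')"
proof -
  define d where "d = norm (dual_sol u - dual_sol u')"
  have "lam_min Ml / \<sigma> * d\<^sup>2 \<le> (u - u') \<bullet> (dual_sol u - dual_sol u')"
    using psi_strong_lower[of u u'] psi_strong_lower[of u' u]
    by (simp add: d_def norm_minus_commute inner_diff_left inner_diff_right algebra_simps)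
  also have "\<dots> \<le> norm (u - u') * d"
    unfolding d_def by (rule norm_cauchy_schwarz)
  finally have "lam_min Ml / \<sigma> * d * d \<le> norm (u - u') * d"
    by (simp add: power2_eq_square mult.assoc)
  then have "lam_min Ml / \<sigma> * d \<le> norm (u - u')"
    by (cases "d = 0") (auto simp: d_def intro: mult_right_le_imp_le)
  then show ?thesis
    using lam_min_pos[OF Ml_pd] \<sigma>_pos by (simp add: d_def field_simps)
qed

lemma psi_upper:
  "\<psi> u' \<le> \<psi> u + (u' - u) \<bullet> dual_sol u + \<sigma> / lam_min Ml * (norm (u' - u))\<^sup>2"
proof -
  have "(u' - u) \<bullet> (dual_sol u' - dual_sol u) \<le> norm (u' - u) * norm (dual_sol u' - dual_sol u)"
    by (rule norm_cauchy_schwarz)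
  also have "\<dots> \<le> norm (u' - u) * (\<sigma> / lam_min Ml * norm (u' - u))"
    using dual_sol_lipschitz[of u' u] by (intro mult_left_mono) auto
  finally show ?thesis
    using psi_gradient_ineq[of u' u]
    by (simp add: inner_diff_left inner_diff_right power2_eq_square algebra_simps)
qed

lemma psi_has_derivative: "(\<psi> has_derivative (\<lambda>v. dual_sol u \<bullet> v)) (at u)"
  unfolding has_derivative_at_alt
proof (intro conjI allI impI)
  show "bounded_linear (\<lambda>v. dual_sol u \<bullet> v)"
    by (rule bounded_linear_inner_right)
  fix e :: real assume "0 < e"
  define \<kappa> where "\<kappa> = \<sigma> / lam_min Ml"
  have "0 < \<kappa>"
    using lam_min_pos[OF Ml_pd] \<sigma>_pos by (simp add: \<kappa>_def)
  have "norm (\<psi> y - \<psi> u - dual_sol u \<bullet> (y - u)) \<le> e * norm (y - u)"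
    if "norm (y - u) < e / \<kappa>" for y
  proof -
    have "0 \<le> \<psi> y - \<psi> u - dual_sol u \<bullet> (y - u)"
      using psi_gradient_ineq[of u y] by (simp add: inner_commute)
    moreover have "\<psi> y - \<psi> u - dual_sol u \<bullet> (y - u) \<le> \<kappa> * norm (y - u) * norm (y - u)"
      using psi_upper[of y u] by (simp add: inner_commute \<kappa>_def power2_eq_square mult.assoc)
    moreover have "\<kappa> * norm (y - u) \<le> e"
      using that \<open>0 < \<kappa>\<close> by (simp add: field_simps)
    then have "\<kappa> * norm (y - u) * norm (y - u) \<le> e * norm (y - u)"
      by (intro mult_right_mono) auto
    ultimately show ?thesis
      by simp
  qed
  then show "\<exists>d>0. \<forall>y. norm (y - u) < d \<longrightarrow> norm (\<psi> y - \<psi> u - dual_sol u \<bullet> (y - u)) \<le> e * norm (y - u)"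
    using \<open>0 < e\<close> \<open>0 < \<kappa>\<close> by (intro exI[of _ "e / \<kappa>"]) auto
qed

end

section \<open>The composite objective\<close>

lemma inner_transpose_matrix_vector:
  fixes A :: "real^'n^'m"
  shows "(transpose A *v l) \<bullet> x = l \<bullet> (A *v x)"
  by (metis dot_lmul_matrix transpose_matrix_vector)

lemma norm_matrix_vector_le:
  fixes A :: "real^'n^'m"
  shows "norm (A *v x) \<le> onorm (\<lambda>x. A *v x) * norm x"
  by (rule onorm[OF matrix_vector_mul_bounded_linear])

lemma norm_transpose_matrix_vector_le:
  fixes A :: "real^'n^'m"
  shows "norm (transpose A *v l) \<le> onorm (\<lambda>x. A *v x) * norm l"
proof -
  define w where "w = transpose A *v l"
  have "(norm w)\<^sup>2 = (A *v w) \<bullet> l"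
    unfolding power2_norm_eq_inner w_def inner_transpose_matrix_vector by (rule inner_commute)
  also have "\<dots> \<le> norm (A *v w) * norm l"
    by (rule norm_cauchy_schwarz)
  also have "\<dots> \<le> onorm (\<lambda>x. A *v x) * norm w * norm l"
    using norm_matrix_vector_le[of A w] by (simp add: mult_right_mono)
  finally have "norm w * norm w \<le> (onorm (\<lambda>x. A *v x) * norm l) * norm w"
    by (simp add: power2_eq_square algebra_simps)
  then show ?thesis
    using onorm_pos_le[OF matrix_vector_mul_bounded_linear, of A]
    by (cases "w = 0") (auto simp: w_def)
qed

lemma norm_sq_le_inner_of_lipschitz:
  fixes a d :: "'a::real_inner"
  assumes "norm a \<le> L * norm d"
  shows "(norm (L *\<^sub>R d - a))\<^sup>2 \<le> 2 * L * ((L *\<^sub>R d - a) \<bullet> d)"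
proof -
  have "(norm a)\<^sup>2 \<le> L\<^sup>2 * (norm d)\<^sup>2"
    using power_mono[OF assms norm_ge_zero] by (simp add: power_mult_distrib)
  then show ?thesis
    unfolding power2_norm_eq_inner
    by (simp add: inner_diff_left inner_diff_right inner_commute power_mult_distrib
        power2_eq_square algebra_simps)
qed

lemma residual_bound_eta:
  fixes D Y lx \<sigma> \<eta> L :: real
  assumes "0 < lx" "0 < \<sigma>" "0 < \<eta>" "0 < L"
    and "D\<^sup>2 \<le> 2 * L * Y" and "Y \<le> lx / \<sigma>\<^sup>2 * (\<eta>\<^sup>2 / (4 * L))"
  shows "D \<le> sqrt lx / \<sigma> * \<eta>"
proof (rule power2_le_imp_le)
  have "2 * L * Y \<le> 2 * L * (lx / \<sigma>\<^sup>2 * (\<eta>\<^sup>2 / (4 * L)))"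
    using assms by (intro mult_left_mono) auto
  also have "\<dots> = (sqrt lx / \<sigma> * \<eta>)\<^sup>2 / 2"
    using assms by (simp add: power_mult_distrib power_divide)
  finally have "2 * L * Y \<le> (sqrt lx / \<sigma> * \<eta>)\<^sup>2 / 2" .
  then show "D\<^sup>2 \<le> (sqrt lx / \<sigma> * \<eta>)\<^sup>2"
    using assms(5) zero_le_power2[of D] by linarith
  show "0 \<le> sqrt lx / \<sigma> * \<eta>"
    using assms by simp
qed

text \<open>Here \<open>X\<close> is the distance from \<open>xbar\<close> to the minimiser, split by the triangle inequality
  into the distance \<open>T\<close> from \<open>xbar\<close> to the prox point and the distance \<open>\<rho>\<close> from the prox point
  to the minimiser; the latter is paid for by a fraction \<open>\<delta> / (1 + \<delta>)\<close> of \<open>D\<close> itself.\<close>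

lemma residual_bound_delta:
  fixes D Y E X T \<rho> lx lM \<sigma> \<delta> L N :: real
  assumes "0 < lx" "0 \<le> lM" "lM \<le> lx" "0 < \<sigma>" "0 < \<delta>" "0 < L"
    and "0 \<le> D" "D\<^sup>2 \<le> 2 * L * Y"
    and "Y \<le> lx / \<sigma>\<^sup>2 * (\<delta>\<^sup>2 * lM / (2 * (1 + \<delta>)\<^sup>2 * L\<^sup>2) * E)"
    and "E \<le> L / 2 * X\<^sup>2" "0 \<le> X" "X \<le> T + \<rho>" "0 \<le> T"
    and "lx / \<sigma> * \<rho> \<le> D" "sqrt lx * T \<le> N"
  shows "D \<le> sqrt lx / \<sigma> * (\<delta> * N)"
proof -
  define a b where "a = sqrt lx" and "b = sqrt lM"
  have "0 < a" "0 \<le> b" "b \<le> a" "a\<^sup>2 = lx" "b\<^sup>2 = lM"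
    using assms by (simp_all add: a_def b_def)
  define \<theta> where "\<theta> = a * b * \<delta> / (\<sigma> * (1 + \<delta>))"
  have "0 \<le> \<theta>"
    using \<open>0 < a\<close> \<open>0 \<le> b\<close> assms by (simp add: \<theta>_def)
  define k where "k = lx / \<sigma>\<^sup>2 * (\<delta>\<^sup>2 * lM / (2 * (1 + \<delta>)\<^sup>2 * L\<^sup>2))"
  have "0 \<le> k"
    using assms by (simp add: k_def)
  have "Y \<le> k * E"
    using assms(9) by (simp add: k_def mult.assoc)
  also have "\<dots> \<le> k * (L / 2 * X\<^sup>2)"
    by (intro mult_left_mono assms(10) \<open>0 \<le> k\<close>)
  finally have "2 * L * Y \<le> 2 * L * (k * (L / 2 * X\<^sup>2))"
    using assms by (intro mult_left_mono) auto
  also have "\<dots> = (\<theta> * X)\<^sup>2 / 2"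
  proof -
    have "2 * L * (lx / \<sigma>\<^sup>2 * (\<delta>\<^sup>2 * lM / (2 * c\<^sup>2 * L\<^sup>2)) * (L / 2 * X\<^sup>2))
        = (a * b * \<delta> / (\<sigma> * c) * X)\<^sup>2 / 2" if "0 < c" for c
      using that assms(4,6) \<open>a\<^sup>2 = lx\<close> \<open>b\<^sup>2 = lM\<close>
      by (simp add: power_mult_distrib power_divide field_simps power2_eq_square[of L, symmetric])
    from this[of "1 + \<delta>"] show ?thesis
      using assms by (simp add: \<theta>_def k_def mult.assoc)
  qed
  finally have "D\<^sup>2 \<le> (\<theta> * X)\<^sup>2"
    using assms(8) zero_le_power2[of "\<theta> * X"] by linarith
  then have "D \<le> \<theta> * X"
    by (rule power2_le_imp_le) (use \<open>0 \<le> \<theta>\<close> \<open>0 \<le> X\<close> in simp)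
  also have "\<dots> \<le> \<theta> * T + \<theta> * \<rho>"
    using \<open>0 \<le> \<theta>\<close> assms(12) by (simp add: distrib_left[symmetric] mult_left_mono)
  finally have "D \<le> \<theta> * T + \<theta> * \<rho>" .
  moreover have "\<theta> * T \<le> \<delta> / (1 + \<delta>) * (a / \<sigma> * N)"
  proof -
    have "a * T \<le> N"
      using assms(15) by (simp add: a_def)
    with \<open>b \<le> a\<close> \<open>0 < a\<close> \<open>0 \<le> T\<close> have "b * (a * T) \<le> a * N"
      by (intro mult_mono) auto
    then have "b * (a * T) * (\<delta> / (\<sigma> * (1 + \<delta>))) \<le> a * N * (\<delta> / (\<sigma> * (1 + \<delta>)))"
      using assms(4,5) by (intro mult_right_mono) auto
    then show ?thesis
      by (simp add: \<theta>_def ac_simps)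
  qed
  moreover have "\<theta> * \<rho> \<le> \<delta> / (1 + \<delta>) * D"
  proof -
    have "lx * \<rho> \<le> \<sigma> * D"
      using assms(4,14) by (simp add: field_simps)
    then have "\<rho> \<le> \<sigma> / a\<^sup>2 * D"
      using \<open>a\<^sup>2 = lx\<close> assms(1) by (simp add: field_simps)
    then have "\<theta> * \<rho> \<le> \<theta> * (\<sigma> / a\<^sup>2 * D)"
      using \<open>0 \<le> \<theta>\<close> by (rule mult_left_mono)
    also have "\<dots> = b / a * (\<delta> / (1 + \<delta>) * D)"
      using \<open>0 < a\<close> assms(4) by (simp add: \<theta>_def power2_eq_square)
    also have "\<dots> \<le> 1 * (\<delta> / (1 + \<delta>) * D)"
      using \<open>0 < a\<close> \<open>b \<le> a\<close> assms(5,7) by (intro mult_right_mono) auto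
    finally show ?thesis
      by simp
  qed
  ultimately have "D \<le> \<delta> / (1 + \<delta>) * (a / \<sigma> * N + D)"
    by (simp add: distrib_left)
  then have "(1 + \<delta>) * D \<le> \<delta> * (a / \<sigma> * N + D)"
    using assms(5) by (simp add: field_simps)
  then show ?thesis
    by (simp add: a_def algebra_simps)
qed

lemma residual_bound:
  fixes D Y E X T \<rho> lx lM \<sigma> \<eta> \<delta> L N :: real
  assumes pos: "0 < lx" "0 \<le> lM" "lM \<le> lx" "0 < \<sigma>" "0 < \<eta>" "0 < \<delta>" "0 < L"
    and D: "0 \<le> D" "D\<^sup>2 \<le> 2 * L * Y"
    and Y: "Y \<le> lx / \<sigma>\<^sup>2 * min (\<eta>\<^sup>2 / (4 * L)) (\<delta>\<^sup>2 * lM / (2 * (1 + \<delta>)\<^sup>2 * L\<^sup>2) * E)"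
    and dist: "E \<le> L / 2 * X\<^sup>2" "0 \<le> X" "X \<le> T + \<rho>" "0 \<le> T"
      "lx / \<sigma> * \<rho> \<le> D" "sqrt lx * T \<le> N"
  shows "D \<le> sqrt lx / \<sigma> * min \<eta> (\<delta> * N)"
proof -
  have "0 \<le> lx / \<sigma>\<^sup>2"
    using pos by simp
  then have "D \<le> sqrt lx / \<sigma> * \<eta>"
    by (intro residual_bound_eta[OF pos(1,4,5,7) D(2)] order.trans[OF Y mult_left_mono[OF min.cobounded1]])
  moreover from \<open>0 \<le> lx / \<sigma>\<^sup>2\<close> have "D \<le> sqrt lx / \<sigma> * (\<delta> * N)"
    by (intro residual_bound_delta[OF pos(1-4,6,7) D _ dist] order.trans[OF Y mult_left_mono[OF min.cobounded2]])
  ultimately show ?thesis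
    using pos by (simp add: min_mult_distrib_left)
qed

locale composite_objective = conjugate_smoothing h Ml lbar \<sigma>
  for h :: "real^'m \<Rightarrow> ereal" and Ml lbar \<sigma> +
  fixes f0 :: "real^'n \<Rightarrow> real" and g :: "real^'n \<Rightarrow> ereal" and A :: "real^'n^'m" and L0 :: real
    and Mx :: "real^'n^'n" and xbar :: "real^'n"
  assumes f0_convex: "convex_on UNIV f0"
    and f0_diff: "\<forall>x. f0 differentiable (at x)"
    and L0_pos: "0 < L0"
    and f0_lip: "\<forall>x z. norm (grad f0 x - grad f0 z) \<le> L0 * norm (x - z)"
    and g_pcc: "proper_closed_convex g" and g_subgrad: "\<exists>x. subgrad g x \<noteq> {}"
    and Mx_pd: "sym_pd Mx"
begin

abbreviation f :: "real^'n \<Rightarrow> real" where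
  "f \<equiv> fsm f0 h A Ml lbar \<sigma>"

abbreviation \<phi> :: "real^'n \<Rightarrow> ereal" where
  "\<phi> \<equiv> phin g Mx xbar \<sigma>"

abbreviation F :: "real^'n \<Rightarrow> ereal" where
  "F \<equiv> Fobj f0 g h A Mx Ml xbar lbar \<sigma>"

abbreviation quad_x :: "real^'n \<Rightarrow> real" where
  "quad_x z \<equiv> (pnorm Mx (z - xbar))\<^sup>2 / (2 * \<sigma>)"

definition Lf :: real where
  "Lf = L0 + \<sigma> / lam_min Ml * (onorm (\<lambda>x. A *v x))\<^sup>2"

abbreviation prox :: "real^'n \<Rightarrow> real^'n" where
  "prox \<equiv> GF Lf f \<phi>"

definition prox_residual :: "real^'n \<Rightarrow> real^'n" where
  "prox_residual x = Lf *\<^sub>R (x - prox x) - (grad f x - grad f (prox x))"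

lemma Lf_pos: "0 < Lf"
  unfolding Lf_def using L0_pos lam_min_pos[OF Ml_pd] \<sigma>_pos by (simp add: add_pos_nonneg)

lemma f_has_derivative:
  "(f has_derivative (\<lambda>v. (grad f0 x + transpose A *v dual_sol (A *v x)) \<bullet> v)) (at x)"
proof -
  have "((\<lambda>x. \<psi> (A *v x)) has_derivative (\<lambda>v. dual_sol (A *v x) \<bullet> (A *v v))) (at x)"
    using has_derivative_compose[OF bounded_linear.has_derivative[OF matrix_vector_mul_bounded_linear[of A]
        has_derivative_ident] psi_has_derivative] .
  from has_derivative_add[OF has_derivative_grad[OF f0_diff[rule_format]] this]
  show ?thesis
    unfolding fsm_def[abs_def] inner_add_left inner_transpose_matrix_vector .
qed

lemma grad_f: "grad f x = grad f0 x + transpose A *v dual_sol (A *v x)"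
  by (rule grad_eqI[OF f_has_derivative])

lemma f_strongly_convex: "strongly_convex_with_gradient 0 f (grad f)"
proof (rule strongly_convex_with_gradientI)
  fix x z
  show "(f has_derivative (\<lambda>v. grad f x \<bullet> v)) (at x)"
    unfolding grad_f by (rule f_has_derivative)
  have "f0 x + grad f0 x \<bullet> (z - x) \<le> f0 z"
    by (rule convex_on_gradient_ineq[OF f0_convex has_derivative_grad[OF f0_diff[rule_format]]])
  moreover have "\<psi> (A *v x) + (A *v z - A *v x) \<bullet> dual_sol (A *v x) \<le> \<psi> (A *v z)"
    by (rule psi_gradient_ineq)
  moreover have "(A *v z - A *v x) \<bullet> dual_sol (A *v x) = (transpose A *v dual_sol (A *v x)) \<bullet> (z - x)"
    unfolding inner_transpose_matrix_vector matrix_vector_mult_diff_distrib[symmetric]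
    by (rule inner_commute)
  ultimately show "f x + grad f x \<bullet> (z - x) + 0 / 2 * (norm (z - x))\<^sup>2 \<le> f z"
    unfolding fsm_def grad_f inner_add_left by simp
qed

lemma grad_f_lipschitz: "norm (grad f x - grad f z) \<le> Lf * norm (x - z)"
proof -
  let ?nA = "onorm (\<lambda>x. A *v x)"
  have "norm (transpose A *v dual_sol (A *v x) - transpose A *v dual_sol (A *v z))
      \<le> ?nA * norm (dual_sol (A *v x) - dual_sol (A *v z))"
    unfolding matrix_vector_mult_diff_distrib[symmetric] by (rule norm_transpose_matrix_vector_le)
  also have "\<dots> \<le> ?nA * (\<sigma> / lam_min Ml * norm (A *v x - A *v z))"
    using dual_sol_lipschitz onorm_pos_le[OF matrix_vector_mul_bounded_linear]
    by (intro mult_left_mono) auto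
  also have "\<dots> \<le> ?nA * (\<sigma> / lam_min Ml * (?nA * norm (x - z)))"
    using norm_matrix_vector_le[of A "x - z"] onorm_pos_le[OF matrix_vector_mul_bounded_linear]
      lam_min_pos[OF Ml_pd] \<sigma>_pos
    by (intro mult_left_mono) (auto simp: matrix_vector_mult_diff_distrib)
  finally have "norm (transpose A *v dual_sol (A *v x) - transpose A *v dual_sol (A *v z))
      \<le> \<sigma> / lam_min Ml * ?nA\<^sup>2 * norm (x - z)"
    by (simp add: power2_eq_square algebra_simps)
  moreover have "norm (grad f0 x - grad f0 z) \<le> L0 * norm (x - z)"
    using f0_lip by blast
  ultimately show ?thesis
    unfolding grad_f Lf_def
    using norm_triangle_ineq[of "grad f0 x - grad f0 z"
        "transpose A *v dual_sol (A *v x) - transpose A *v dual_sol (A *v z)"]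
    by (simp add: algebra_simps)
qed

lemma f_descent: "f z \<le> f x + grad f x \<bullet> (z - x) + Lf / 2 * (norm (z - x))\<^sup>2"
  using f_has_derivative grad_f_lipschitz
  by (intro lipschitz_gradient_descent) (auto simp: differentiable_def)

lemma quad_x_strongly_convex:
  "strongly_convex_with_gradient (lam_min Mx / \<sigma>) quad_x (\<lambda>z. (1 / \<sigma>) *\<^sub>R (Mx *v (z - xbar)))"
  by (rule strongly_convex_with_gradient_pnorm_sq[OF Mx_pd \<sigma>_pos])

lemma ereal_add_phi: "ereal a + \<phi> z = ereal (a + quad_x z) + g z"
  by (cases "g z") (auto simp: phin_def)

lemma F_eq: "F z = ereal (f z + quad_x z) + g z"
  by (simp add: Fobj_def ereal_add_phi)

lemma prox_argmin:
  fixes x :: "real^'n"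
  defines "w \<equiv> x - (1 / Lf) *\<^sub>R grad f x"
  shows "ereal (Lf / 2 * (norm (prox x - w))\<^sup>2) + \<phi> (prox x)
    \<le> ereal (Lf / 2 * (norm (z - w))\<^sup>2) + \<phi> z"
proof -
  obtain x0 v where "v \<in> subgrad g x0"
    using g_subgrad by blast
  have "\<exists>!p. \<forall>z. ereal (Lf / 2 * (norm (p - w))\<^sup>2 + quad_x p) + g p
      \<le> ereal (Lf / 2 * (norm (z - w))\<^sup>2 + quad_x z) + g z"
    by (rule strongly_convex_ex1_argmin[OF strongly_convex_with_gradient_add[OF
          strongly_convex_with_gradient_norm_sq[of Lf w] quad_x_strongly_convex] _ g_pcc \<open>v \<in> _\<close>])
      (intro add_pos_pos Lf_pos divide_pos_pos lam_min_pos[OF Mx_pd] \<sigma>_pos)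
  then have "\<exists>!p. \<forall>z. ereal (Lf / 2 * (norm (p - w))\<^sup>2) + \<phi> p \<le> ereal (Lf / 2 * (norm (z - w))\<^sup>2) + \<phi> z"
    by (simp only: ereal_add_phi)
  then show ?thesis
    unfolding GF_def w_def by (rule theI'[THEN spec])
qed

lemma f_quad_x_strongly_convex:
  "strongly_convex_with_gradient (lam_min Mx / \<sigma>)
     (\<lambda>z. f z + quad_x z) (\<lambda>z. grad f z + (1 / \<sigma>) *\<^sub>R (Mx *v (z - xbar)))"
  using strongly_convex_with_gradient_add[OF f_strongly_convex quad_x_strongly_convex] by simp

text \<open>The optimality condition of the prox step for \<open>g\<close>, plus the gradient inequality for
  \<open>f + quad_x\<close>.\<close>

lemma prox_strong_subgrad:
  shows "\<bar>F (prox x)\<bar> \<noteq> \<infinity>"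
    and "F (prox x) + ereal (prox_residual x \<bullet> (z - prox x) + lam_min Mx / (2 * \<sigma>) * (norm (z - prox x))\<^sup>2)
    \<le> F z"
proof -
  define w where "w = x - (1 / Lf) *\<^sub>R grad f x"
  define p where "p = prox x"
  have min: "ereal (Lf / 2 * (norm (p - w))\<^sup>2 + quad_x p) + g p
      \<le> ereal (Lf / 2 * (norm (z - w))\<^sup>2 + quad_x z) + g z" for z
    using prox_argmin[of x z] unfolding ereal_add_phi p_def w_def .
  have sg: "- (Lf *\<^sub>R (p - w) + (1 / \<sigma>) *\<^sub>R (Mx *v (p - xbar))) \<in> subgrad g p"
    using strongly_convex_argmin_subgrad[OF strongly_convex_with_gradient_add[OF
          strongly_convex_with_gradient_norm_sq[of Lf w] quad_x_strongly_convex] g_pcc min]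
    by simp
  then show "\<bar>F (prox x)\<bar> \<noteq> \<infinity>"
    by (cases "g p") (auto simp: F_eq subgrad_def p_def)
  from subgrad_add_strongly_convex[OF f_quad_x_strongly_convex sg, of z]
  have "ereal (f p + quad_x p) + g p + ereal ((grad f p + (1 / \<sigma>) *\<^sub>R (Mx *v (p - xbar))
      + - (Lf *\<^sub>R (p - w) + (1 / \<sigma>) *\<^sub>R (Mx *v (p - xbar)))) \<bullet> (z - p)
      + lam_min Mx / \<sigma> / 2 * (norm (z - p))\<^sup>2) \<le> ereal (f z + quad_x z) + g z" .
  moreover have "grad f p + (1 / \<sigma>) *\<^sub>R (Mx *v (p - xbar)) + - (Lf *\<^sub>R (p - w)
      + (1 / \<sigma>) *\<^sub>R (Mx *v (p - xbar))) = prox_residual x"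
    using Lf_pos by (simp add: prox_residual_def w_def p_def scaleR_diff_right algebra_simps)
  ultimately show "F (prox x) + ereal (prox_residual x \<bullet> (z - prox x)
      + lam_min Mx / (2 * \<sigma>) * (norm (z - prox x))\<^sup>2) \<le> F z"
    unfolding F_eq p_def by (simp add: divide_divide_eq_left mult.commute[of \<sigma> 2])
qed

lemma prox_residual_in_subgrad: "prox_residual x \<in> subgrad F (prox x)"
proof -
  have "F (prox x) + ereal (prox_residual x \<bullet> (z - prox x))
      \<le> F (prox x) + ereal (prox_residual x \<bullet> (z - prox x) + lam_min Mx / (2 * \<sigma>) * (norm (z - prox x))\<^sup>2)"
    for z
    using lam_min_pos[OF Mx_pd] \<sigma>_pos by (intro add_left_mono) simp
  then have "F (prox x) + ereal (prox_residual x \<bullet> (z - prox x)) \<le> F z" for z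
    using prox_strong_subgrad(2)[of x z] by (rule order.trans)
  with prox_strong_subgrad(1)[of x] show ?thesis
    by (simp add: subgrad_def)
qed

text \<open>Up to a constant, the prox model at \<open>x\<close> is the quadratic upper bound of \<open>f\<close> plus \<open>\<phi>\<close>:
  it dominates \<open>F\<close> by the descent lemma and is dominated by \<open>F + Lf/2 \<parallel>\<cdot> - x\<parallel>\<^sup>2\<close> by convexity.\<close>

lemma prox_descent: "F (prox x) \<le> F z + ereal (Lf / 2 * (norm (z - x))\<^sup>2)"
proof -
  define G where "G = grad f x"
  define w where "w = x - (1 / Lf) *\<^sub>R G"
  define c where "c = f x - (norm G)\<^sup>2 / (2 * Lf)"
  have model: "Lf / 2 * (norm (u - w))\<^sup>2 = Lf / 2 * (norm (u - x))\<^sup>2 + G \<bullet> (u - x) + (norm G)\<^sup>2 / (2 * Lf)"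
    for u
  proof -
    have "(norm (u - w))\<^sup>2 = (norm (u - x))\<^sup>2 + 2 * ((u - x) \<bullet> ((1 / Lf) *\<^sub>R G)) + (norm ((1 / Lf) *\<^sub>R G))\<^sup>2"
      using power2_norm_add[of "u - x" "(1 / Lf) *\<^sub>R G"] by (simp add: w_def algebra_simps)
    also have "\<dots> = (norm (u - x))\<^sup>2 + 2 / Lf * (G \<bullet> (u - x)) + (norm G)\<^sup>2 / Lf\<^sup>2"
      using Lf_pos by (simp add: power_mult_distrib power_divide inner_commute)
    finally show ?thesis
      using Lf_pos by (simp add: field_simps power2_eq_square)
  qed
  have "F (prox x) = ereal (f (prox x)) + \<phi> (prox x)"
    by (simp add: Fobj_def)
  also have "\<dots> \<le> ereal (f x + G \<bullet> (prox x - x) + Lf / 2 * (norm (prox x - x))\<^sup>2) + \<phi> (prox x)"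
    using f_descent[of "prox x" x] by (intro add_right_mono) (simp add: G_def)
  also have "\<dots> = ereal c + (ereal (Lf / 2 * (norm (prox x - w))\<^sup>2) + \<phi> (prox x))"
    using model[of "prox x"] Lf_pos by (cases "\<phi> (prox x)") (simp_all add: c_def field_simps)
  also have "\<dots> \<le> ereal c + (ereal (Lf / 2 * (norm (z - w))\<^sup>2) + \<phi> z)"
    using prox_argmin[of x z] by (intro add_left_mono) (simp add: w_def G_def)
  also have "\<dots> = ereal (f x + G \<bullet> (z - x) + Lf / 2 * (norm (z - x))\<^sup>2) + \<phi> z"
    using model[of z] Lf_pos by (cases "\<phi> z") (simp_all add: c_def field_simps)
  also have "\<dots> \<le> ereal (f z + Lf / 2 * (norm (z - x))\<^sup>2) + \<phi> z"
    using strongly_convex_with_gradientD(2)[OF f_strongly_convex, of x z]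
    by (intro add_right_mono) (simp add: G_def)
  also have "\<dots> = F z + ereal (Lf / 2 * (norm (z - x))\<^sup>2)"
    by (cases "\<phi> z") (simp_all add: Fobj_def)
  finally show ?thesis .
qed

lemma F_has_argmin: "\<exists>xs. \<forall>z. F xs \<le> F z"
proof -
  obtain x0 v where "v \<in> subgrad g x0"
    using g_subgrad by blast
  have "\<exists>!p. \<forall>z. ereal (f p + quad_x p) + g p \<le> ereal (f z + quad_x z) + g z"
    by (rule strongly_convex_ex1_argmin[OF f_quad_x_strongly_convex _ g_pcc \<open>v \<in> _\<close>])
      (intro divide_pos_pos lam_min_pos[OF Mx_pd] \<sigma>_pos)
  then show ?thesis
    unfolding F_eq by blast
qed

lemma F_argmin_growth:
  assumes min: "\<And>z. F xs \<le> F z"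
  shows "\<bar>F xs\<bar> \<noteq> \<infinity>" and "F xs + ereal (lam_min Mx / (2 * \<sigma>) * (norm (z - xs))\<^sup>2) \<le> F z"
proof -
  have min': "ereal (f xs + quad_x xs) + g xs \<le> ereal (f z + quad_x z) + g z" for z
    using min[of z] unfolding F_eq .
  show "\<bar>F xs\<bar> \<noteq> \<infinity>"
    using strongly_convex_argmin_subgrad[OF f_quad_x_strongly_convex g_pcc min']
    by (cases "g xs") (auto simp: F_eq subgrad_def)
  show "F xs + ereal (lam_min Mx / (2 * \<sigma>) * (norm (z - xs))\<^sup>2) \<le> F z"
    using strongly_convex_argmin_growth[OF f_quad_x_strongly_convex g_pcc min', of z]
    unfolding F_eq by (simp add: mult.commute)
qed

lemma prox_residual_decrease: "F (prox x) + ereal ((norm (prox_residual x))\<^sup>2 / (2 * Lf)) \<le> F x"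
proof -
  have "(norm (prox_residual x))\<^sup>2 \<le> 2 * Lf * (prox_residual x \<bullet> (x - prox x))"
    unfolding prox_residual_def by (intro norm_sq_le_inner_of_lipschitz grad_f_lipschitz)
  then have "(norm (prox_residual x))\<^sup>2 / (2 * Lf) \<le> prox_residual x \<bullet> (x - prox x)"
    using Lf_pos by (simp add: pos_divide_le_eq mult.commute)
  moreover have "0 \<le> lam_min Mx / (2 * \<sigma>) * (norm (x - prox x))\<^sup>2"
    using lam_min_pos[OF Mx_pd] \<sigma>_pos by simp
  ultimately have "(norm (prox_residual x))\<^sup>2 / (2 * Lf)
      \<le> prox_residual x \<bullet> (x - prox x) + lam_min Mx / (2 * \<sigma>) * (norm (x - prox x))\<^sup>2"
    by linarith
  then have "F (prox x) + ereal ((norm (prox_residual x))\<^sup>2 / (2 * Lf)) \<le> F (prox x)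
      + ereal (prox_residual x \<bullet> (x - prox x) + lam_min Mx / (2 * \<sigma>) * (norm (x - prox x))\<^sup>2)"
    by (intro add_left_mono) simp
  also have "\<dots> \<le> F x"
    by (rule prox_strong_subgrad(2))
  finally show ?thesis .
qed

lemma prox_dist_argmin_le:
  assumes min: "\<And>z. F xs \<le> F z"
  shows "lam_min Mx / \<sigma> * norm (prox x - xs) \<le> norm (prox_residual x)"
proof -
  define \<rho> where "\<rho> = norm (prox x - xs)"
  define c where "c = lam_min Mx / (2 * \<sigma>)"
  obtain Fs where Fs: "F xs = ereal Fs"
    using F_argmin_growth(1)[OF min] by (cases "F xs") auto
  have "F xs + ereal (c * \<rho>\<^sup>2) \<le> F (prox x)"
    using F_argmin_growth(2)[OF min] by (simp add: c_def \<rho>_def)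
  moreover have "F (prox x) + ereal (prox_residual x \<bullet> (xs - prox x) + c * \<rho>\<^sup>2) \<le> F xs"
    using prox_strong_subgrad(2)[of x xs] by (simp add: c_def \<rho>_def norm_minus_commute)
  ultimately have "2 * c * \<rho>\<^sup>2 \<le> - (prox_residual x \<bullet> (xs - prox x))"
    using Fs by (cases "F (prox x)") auto
  also have "\<dots> \<le> norm (prox_residual x) * \<rho>"
    using norm_cauchy_schwarz[of "prox_residual x" "prox x - xs"]
    by (simp add: \<rho>_def inner_diff_right)
  finally have "lam_min Mx / \<sigma> * \<rho> * \<rho> \<le> norm (prox_residual x) * \<rho>"
    using \<sigma>_pos by (simp add: c_def power2_eq_square)
  then show ?thesis
    unfolding \<rho>_def[symmetric] by (cases "\<rho> = 0") (auto simp: \<rho>_def intro: mult_right_le_imp_le)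
qed

theorem prox_residual_bound:
  fixes y :: "real^'n" and lM \<eta> \<delta> N :: real
  assumes lM: "0 \<le> lM" "lM \<le> lam_min Mx" and "0 < \<eta>" "0 < \<delta>"
    and N: "sqrt (lam_min Mx) * norm (prox y - xbar) \<le> N"
    and y_bound: "F y - (INF x. F x) \<le> ereal (lam_min Mx / \<sigma>\<^sup>2) *
      min (ereal (\<eta>\<^sup>2 / (4 * Lf)))
          (ereal (\<delta>\<^sup>2 * lM / (2 * (1 + \<delta>)\<^sup>2 * Lf\<^sup>2)) * (F (prox xbar) - (INF x. F x)))"
  shows "subgrad F (prox y) \<noteq> {} \<and>
    infdist 0 (subgrad F (prox y)) \<le> sqrt (lam_min Mx) / \<sigma> * min \<eta> (\<delta> * N)"
proof -
  obtain xs where min: "\<And>z. F xs \<le> F z"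
    using F_has_argmin by blast
  obtain Fs where Fs: "F xs = ereal Fs"
    using F_argmin_growth(1)[OF min] by (cases "F xs") auto
  have Fstar: "(INF x. F x) = ereal Fs"
    unfolding Fs[symmetric] by (intro antisym INF_lower INF_greatest min) simp
  have F_ge: "ereal Fs \<le> F z" for z
    using min[of z] Fs by simp
  obtain Fb where Fb: "F (prox xbar) = ereal Fb"
    using prox_descent[of xbar xs] F_ge[of "prox xbar"] Fs by (cases "F (prox xbar)") auto
  have Fb_le: "Fb - Fs \<le> Lf / 2 * (norm (xs - xbar))\<^sup>2"
    using prox_descent[of xbar xs] Fb Fs by simp
  define R where "R = lam_min Mx / \<sigma>\<^sup>2 * min (\<eta>\<^sup>2 / (4 * Lf))
    (\<delta>\<^sup>2 * lM / (2 * (1 + \<delta>)\<^sup>2 * Lf\<^sup>2) * (Fb - Fs))"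
  have "F y - ereal Fs \<le> ereal R"
    using y_bound by (simp add: Fstar Fb R_def del: ereal_min add: ereal_min[symmetric])
  then obtain Fy where Fy: "F y = ereal Fy" and Fy_le: "Fy - Fs \<le> R"
    using F_ge[of y] by (cases "F y") auto
  have "ereal Fs + ereal ((norm (prox_residual y))\<^sup>2 / (2 * Lf))
      \<le> F (prox y) + ereal ((norm (prox_residual y))\<^sup>2 / (2 * Lf))"
    by (rule add_right_mono[OF F_ge])
  then have "ereal Fs + ereal ((norm (prox_residual y))\<^sup>2 / (2 * Lf)) \<le> F y"
    using prox_residual_decrease[of y] by (rule order.trans)
  then have decrease: "(norm (prox_residual y))\<^sup>2 \<le> 2 * Lf * (Fy - Fs)"
    using Fy Lf_pos by (simp add: field_simps)
  have "norm (prox_residual y) \<le> sqrt (lam_min Mx) / \<sigma> * min \<eta> (\<delta> * N)"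
  proof (rule residual_bound)
    show "0 < lam_min Mx" "0 < Lf" "0 < \<sigma>"
      using lam_min_pos[OF Mx_pd] Lf_pos \<sigma>_pos by auto
    show "norm (xs - xbar) \<le> norm (prox y - xbar) + norm (prox y - xs)"
      using norm_triangle_ineq[of "prox y - xbar" "xs - prox y"] by (simp add: norm_minus_commute)
    show "lam_min Mx / \<sigma> * norm (prox y - xs) \<le> norm (prox_residual y)"
      by (rule prox_dist_argmin_le[OF min])
    show "Fb - Fs \<le> Lf / 2 * (norm (xs - xbar))\<^sup>2"
      by (rule Fb_le)
    show "Fy - Fs \<le> lam_min Mx / \<sigma>\<^sup>2 * min (\<eta>\<^sup>2 / (4 * Lf))
        (\<delta>\<^sup>2 * lM / (2 * (1 + \<delta>)\<^sup>2 * Lf\<^sup>2) * (Fb - Fs))"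
      using Fy_le by (simp only: R_def)
  qed (use lM \<open>0 < \<eta>\<close> \<open>0 < \<delta>\<close> N decrease in simp_all)
  moreover have "infdist 0 (subgrad F (prox y)) \<le> norm (prox_residual y)"
    using infdist_le[OF prox_residual_in_subgrad[of y], of 0] by simp
  ultimately show ?thesis
    using prox_residual_in_subgrad[of y] by auto
qed

end

theorem proposition4:
  fixes f0 :: "real^'n \<Rightarrow> real" and g :: "real^'n \<Rightarrow> ereal" and h :: "real^'m \<Rightarrow> ereal"
    and A :: "real^'n^'m" and L0 :: real
    and Mx :: "real^'n^'n" and Ml :: "real^'m^'m"
    and xbar y :: "real^'n" and lbar :: "real^'m" and \<sigma> \<eta> \<delta> :: real
  assumes f0_convex: "convex_on UNIV f0"
    and f0_diff: "\<forall>x. f0 differentiable (at x)"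
    and L0_pos: "0 < L0"
    and f0_lip: "\<forall>x z. norm (grad f0 x - grad f0 z) \<le> L0 * norm (x - z)"
    and g_pcc: "proper_closed_convex g" and h_pcc: "proper_closed_convex h"
    and Omega_ne: "\<exists>x l. \<exists>v \<in> subgrad g x. \<exists>u \<in> subgrad (fconj h) l.
                      grad f0 x + v + transpose A *v l = 0 \<and> u - A *v x = 0"
    and Mx_pd: "sym_pd Mx" and Ml_pd: "sym_pd Ml"
    and M_max: "lam_max (blockdiag Mx Ml) = 1"
    and \<sigma>_pos: "0 < \<sigma>" and \<eta>_pos: "0 < \<eta>" and \<delta>_pos: "0 < \<delta>"
  defines "f \<equiv> fsm f0 h A Ml lbar \<sigma>"
    and "\<phi> \<equiv> phin g Mx xbar \<sigma>"
    and "F \<equiv> Fobj f0 g h A Mx Ml xbar lbar \<sigma>"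
    and "Fstar \<equiv> (INF x. Fobj f0 g h A Mx Ml xbar lbar \<sigma> x)"
    and "L \<equiv> L0 + \<sigma> / lam_min Ml * (onorm (\<lambda>x. A *v x))\<^sup>2"
    and "M \<equiv> blockdiag Mx Ml"
  assumes y_bound: "F y - Fstar \<le> ereal (lam_min Mx / \<sigma>\<^sup>2) *
      min (ereal (\<eta>\<^sup>2 / (4 * L)))
          (ereal (\<delta>\<^sup>2 * lam_min M / (2 * (1 + \<delta>)\<^sup>2 * L\<^sup>2)) * (F (GF L f \<phi> xbar) - Fstar))"
  shows "subgrad F (GF L f \<phi> y) \<noteq> {} \<and>
    infdist 0 (subgrad F (GF L f \<phi> y)) \<le> sqrt (lam_min Mx) / \<sigma> *
      min \<eta> (\<delta> * pnorm M (stack (GF L f \<phi> y) (Lam f0 g h A Ml (GF L f \<phi> y) lbar \<sigma>)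
                              - stack xbar lbar))"
proof -
  have "\<exists>l. subgrad (fconj h) l \<noteq> {}" "\<exists>x. subgrad g x \<noteq> {}"
    using Omega_ne by blast+
  then interpret composite_objective h Ml lbar \<sigma> f0 g A L0 Mx xbar
    using f0_convex f0_diff L0_pos f0_lip g_pcc Mx_pd Ml_pd \<sigma>_pos by unfold_locales
  have L: "L = Lf"
    by (simp add: L_def Lf_def)
  have lM: "0 \<le> lam_min M" "lam_min M \<le> lam_min Mx"
    using lam_min_pos[OF sym_pd_blockdiag[OF Mx_pd Ml_pd]] lam_min_blockdiag_le[OF Mx_pd Ml_pd]
    by (simp_all add: M_def)
  have "sqrt (lam_min Mx) * norm (prox y - xbar)
      \<le> pnorm M (stack (prox y) (Lam f0 g h A Ml (prox y) lbar \<sigma>) - stack xbar lbar)"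
    unfolding M_def stack_diff by (rule pnorm_blockdiag_stack_ge[OF Mx_pd Ml_pd])
  from prox_residual_bound[OF lM \<eta>_pos \<delta>_pos this] y_bound
  show ?thesis
    unfolding f_def \<phi>_def F_def Fstar_def L by blast
qed

end
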